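(* A finite tree has cutwidth at most $2$ if and only if, for some $n$, it is (isomorphic to) a subgraph of some graph homeomorphic to $G_n$.
   Context: A graph with $n$ vertices has cutwidth at most $2$ if its vertices can be numbered $1,\ldots,n$ (bijectively) so that for every $i=1,\ldots,n-1$ there are at most two edges $(u,v)$ with $u\le i<v$. For $n\ge 2$, $G_n$ denotes the graph with $3n-4$ vertices consisting of a path on $n$ vertices in which every vertex of the path other than its two endpoints is additionally joined to two further pendant (degree-one) vertices. Two graphs are homeomorphic if they have isomorphic subdivisions (equivalently, one can pass between them by subdividing edges and suppressing vertices of degree $2$). *)

theory Defs
  imports Main
begin

definition graph :: "'a set \<Rightarrow> 'a set set \<Rightarrow> bool" where
  "graph V E \<longleftrightarrow> finite V \<and> (\<forall>e\<in>E. \<exists>u v. e = {u, v} \<and> u \<noteq> v \<and> u \<in> V \<and> v \<in> V)"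

definition adj_rel :: "'a set set \<Rightarrow> ('a \<times> 'a) set" where
  "adj_rel E = {(u, v). {u, v} \<in> E}"

definition connected_graph :: "'a set \<Rightarrow> 'a set set \<Rightarrow> bool" where
  "connected_graph V E \<longleftrightarrow> (\<forall>u\<in>V. \<forall>v\<in>V. (u, v) \<in> (adj_rel E)\<^sup>*)"

definition has_cycle :: "'a set \<Rightarrow> 'a set set \<Rightarrow> bool" where
  "has_cycle V E \<longleftrightarrow> (\<exists>xs. length xs \<ge> 3 \<and> distinct xs \<and> set xs \<subseteq> V \<and>
      (\<forall>i < length xs - 1. {xs ! i, xs ! (i + 1)} \<in> E) \<and> {last xs, hd xs} \<in> E)"

definition tree :: "'a set \<Rightarrow> 'a set set \<Rightarrow> bool" where
  "tree V E \<longleftrightarrow> graph V E \<and> V \<noteq> {} \<and> connected_graph V E \<and> \<not> has_cycle V E"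

definition cutwidth_le2 :: "'a set \<Rightarrow> 'a set set \<Rightarrow> bool" where
  "cutwidth_le2 V E \<longleftrightarrow> (\<exists>f :: 'a \<Rightarrow> nat. bij_betw f V {1..card V} \<and>
     (\<forall>i. 1 \<le> i \<and> i < card V \<longrightarrow>
        card {e \<in> E. \<exists>u\<in>e. \<exists>v\<in>e. f u \<le> i \<and> i < f v} \<le> 2))"

definition graph_iso :: "'a set \<Rightarrow> 'a set set \<Rightarrow> 'b set \<Rightarrow> 'b set set \<Rightarrow> bool" where
  "graph_iso V E V' E' \<longleftrightarrow> (\<exists>f. bij_betw f V V' \<and>
     (\<forall>u\<in>V. \<forall>v\<in>V. {u, v} \<in> E \<longleftrightarrow> {f u, f v} \<in> E'))"

definition subgraph :: "'a set \<Rightarrow> 'a set set \<Rightarrow> 'a set \<Rightarrow> 'a set set \<Rightarrow> bool" where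
  "subgraph V' E' V E \<longleftrightarrow> graph V' E' \<and> V' \<subseteq> V \<and> E' \<subseteq> E"

definition subdiv_step :: "'a set \<Rightarrow> 'a set set \<Rightarrow> 'a set \<Rightarrow> 'a set set \<Rightarrow> bool" where
  "subdiv_step V E V' E' \<longleftrightarrow> (\<exists>u v w. {u, v} \<in> E \<and> u \<noteq> v \<and> w \<notin> V \<and>
      V' = insert w V \<and> E' = (E - {{u, v}}) \<union> {{u, w}, {w, v}})"

inductive subdivision :: "'a set \<Rightarrow> 'a set set \<Rightarrow> 'a set \<Rightarrow> 'a set set \<Rightarrow> bool" where
  refl: "subdivision V E V E"
| step: "subdivision V E V1 E1 \<Longrightarrow> subdiv_step V1 E1 V2 E2 \<Longrightarrow> subdivision V E V2 E2"

definition homeomorphic :: "'a set \<Rightarrow> 'a set set \<Rightarrow> 'a set \<Rightarrow> 'a set set \<Rightarrow> bool" where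
  "homeomorphic V1 E1 V2 E2 \<longleftrightarrow> graph V1 E1 \<and> graph V2 E2 \<and>
     (\<exists>S1 F1 S2 F2. subdivision V1 E1 S1 F1 \<and> subdivision V2 E2 S2 F2 \<and> graph_iso S1 F1 S2 F2)"

text \<open>G_n on vertex type nat: path vertex i (1..n) is 3i; its pendants (2 \<le> i \<le> n-1) are 3i+1, 3i+2.\<close>
definition GV :: "nat \<Rightarrow> nat set" where
  "GV n = {3 * i | i. 1 \<le> i \<and> i \<le> n} \<union> {3 * i + 1 | i. 2 \<le> i \<and> i + 1 \<le> n}
          \<union> {3 * i + 2 | i. 2 \<le> i \<and> i + 1 \<le> n}"

definition GE :: "nat \<Rightarrow> nat set set" where
  "GE n = {{3 * i, 3 * (i + 1)} | i. 1 \<le> i \<and> i < n}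
          \<union> {{3 * i, 3 * i + 1} | i. 2 \<le> i \<and> i + 1 \<le> n}
          \<union> {{3 * i, 3 * i + 2} | i. 2 \<le> i \<and> i + 1 \<le> n}"

end

theory Submission
  imports Defs
begin

text \<open>
  Call an injective numbering with at most two edges crossing each gap a layout of width two.
  Such layouts pass to subgraphs and isomorphic copies, and survive subdividing an edge (put the
  new vertex right after one end) and undoing a subdivision. \<open>G_n\<close> has one, with every path
  vertex between its two pendants; so every subgraph of a graph homeomorphic to \<open>G_n\<close> has
  cutwidth at most two.

  Conversely, number a tree with cutwidth at most two. A shortest path from the first to the last
  vertex is increasing, since a step backwards over a gap would add two more path edges crossing
  it. This spine crosses every gap, so every gap is crossed by at most one other edge. Hence every
  other vertex reaches the spine by a unique increasing (or decreasing) path of non-spine edges,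
  ending at its anchor, and the vertices hanging from one spine vertex on one side form a single
  path, ordered by their distance to it. Mapping the spine to the path of \<open>G_n\<close> and inserting
  these vertices one at a time, each subdividing a pendant edge, embeds the tree in a subdivision
  of \<open>G_n\<close>.
\<close>

lemma graph_edge_subset: "graph V E \<Longrightarrow> e \<in> E \<Longrightarrow> e \<subseteq> V"
  unfolding graph_def by force

lemma graph_edgeE:
  assumes "graph V E" "e \<in> E"
  obtains u v where "e = {u, v}" "u \<noteq> v" "u \<in> V" "v \<in> V"
  using assms unfolding graph_def by blast

lemma graph_doubleton_edge: "graph V E \<Longrightarrow> {x, y} \<in> E \<Longrightarrow> x \<in> V \<and> y \<in> V \<and> x \<noteq> y"
  by (erule graph_edgeE) (auto simp: doubleton_eq_iff)

lemma graph_finite_edges: "graph V E \<Longrightarrow> finite E"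
  by (rule finite_subset[of _ "Pow V"]) (auto simp: graph_def dest: graph_edge_subset)

lemma subdiv_step_graph:
  assumes "subdiv_step V E V' E'" "graph V E"
  shows "graph V' E'"
proof -
  obtain u v w where "{u, v} \<in> E" "w \<notin> V" "V' = insert w V"
    "E' = (E - {{u, v}}) \<union> {{u, w}, {w, v}}"
    using assms(1) unfolding subdiv_step_def by blast
  moreover from this have "u \<in> V" "v \<in> V" using graph_doubleton_edge[OF assms(2)] by blast+
  ultimately show ?thesis using assms(2) unfolding graph_def by blast
qed

lemma subdivision_graph: "subdivision V E V' E' \<Longrightarrow> graph V E \<Longrightarrow> graph V' E'"
  by (induction rule: subdivision.induct) (auto intro: subdiv_step_graph)

lemma subgraph_iso_if_embedding:
  assumes g: "graph V E" and inj: "inj_on h V" and hV: "h ` V \<subseteq> HV"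
    and hE: "\<And>u v. {u, v} \<in> E \<Longrightarrow> {h u, h v} \<in> HE"
  shows "\<exists>V' E'. subgraph V' E' HV HE \<and> graph_iso V E V' E'"
proof (intro exI conjI)
  show "subgraph (h ` V) (image h ` E) HV HE"
    unfolding subgraph_def graph_def
  proof (intro conjI ballI)
    show "finite (h ` V)" using g unfolding graph_def by simp
    fix e' assume "e' \<in> image h ` E"
    then obtain e where "e \<in> E" "e' = h ` e" by blast
    then obtain u v where "e = {u, v}" "u \<noteq> v" "u \<in> V" "v \<in> V" "e' = {h u, h v}"
      using g by (auto elim: graph_edgeE)
    moreover from this have "h u \<noteq> h v" using inj by (auto dest: inj_onD)
    ultimately show "\<exists>a b. e' = {a, b} \<and> a \<noteq> b \<and> a \<in> h ` V \<and> b \<in> h ` V" by blast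
  next
    show "image h ` E \<subseteq> HE" using g hE by (auto elim!: graph_edgeE)
  qed (rule hV)
  show "graph_iso V E (h ` V) (image h ` E)"
    unfolding graph_iso_def
  proof (intro exI conjI ballI)
    show "bij_betw h V (h ` V)" using inj by (simp add: bij_betw_def)
    fix u v assume uv: "u \<in> V" "v \<in> V"
    have "{h u, h v} \<in> image h ` E \<longleftrightarrow> (\<exists>e\<in>E. h ` {u, v} = h ` e)" by auto
    also have "\<dots> \<longleftrightarrow> {u, v} \<in> E"
      using uv graph_edge_subset[OF g] inj_on_image_eq_iff[OF inj] by (metis empty_subsetI insert_subset)
    finally show "{u, v} \<in> E \<longleftrightarrow> {h u, h v} \<in> image h ` E" by simp
  qed
qed

lemma homeomorphic_subdivision:
  assumes "graph V E" "subdivision V E S F"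
  shows "homeomorphic S F V E"
proof -
  have "graph S F" using subdivision_graph assms by blast
  moreover have "graph_iso S F S F" unfolding graph_iso_def by (rule exI[of _ id]) simp
  ultimately show ?thesis using assms subdivision.refl unfolding homeomorphic_def by blast
qed

section \<open>Layouts of width two\<close>

definition cut_edges :: "('a \<Rightarrow> nat) \<Rightarrow> 'a set set \<Rightarrow> nat \<Rightarrow> 'a set set" where
  "cut_edges f E i = {e \<in> E. \<exists>u\<in>e. \<exists>v\<in>e. f u \<le> i \<and> i < f v}"

text \<open>An injective numbering that need not be onto \<open>{1..card V}\<close>: unlike the numberings in
  \<open>cutwidth_le2\<close>, these survive passing to subgraphs and subdivisions.\<close>

definition width2_layout :: "'a set \<Rightarrow> 'a set set \<Rightarrow> ('a \<Rightarrow> nat) \<Rightarrow> bool" where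
  "width2_layout V E f \<longleftrightarrow> inj_on f V \<and> (\<forall>i. card (cut_edges f E i) \<le> 2)"

lemma doubleton_in_cut_edges:
  "{a, b} \<in> cut_edges f E i \<longleftrightarrow> {a, b} \<in> E \<and> (f a \<le> i \<and> i < f b \<or> f b \<le> i \<and> i < f a)"
  unfolding cut_edges_def by auto

lemma finite_cut_edges: "finite E \<Longrightarrow> finite (cut_edges f E i)"
  unfolding cut_edges_def by simp

lemma cut_edges_mono: "E' \<subseteq> E \<Longrightarrow> cut_edges f E' i \<subseteq> cut_edges f E i"
  unfolding cut_edges_def by auto

lemma cut_edges_outside:
  assumes "graph V E" "\<forall>v\<in>V. 1 \<le> f v \<and> f v \<le> n" "\<not> (1 \<le> i \<and> i < n)"
  shows "cut_edges f E i = {}"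
  using assms graph_edge_subset[OF assms(1)] unfolding cut_edges_def by fastforce

lemma cut_edges_cong:
  assumes "\<forall>e\<in>E. e \<subseteq> V" "\<forall>u\<in>V. g u \<le> i \<longleftrightarrow> f u \<le> j"
  shows "cut_edges g E i = cut_edges f E j"
proof -
  have "\<forall>u\<in>V. i < g u \<longleftrightarrow> j < f u" using assms(2) by (meson not_le)
  then show ?thesis using assms unfolding cut_edges_def by blast
qed

lemma cutwidth_le2_iff:
  assumes "graph V E"
  shows "cutwidth_le2 V E \<longleftrightarrow>
    (\<exists>f. bij_betw f V {1..card V} \<and> (\<forall>i. card (cut_edges f E i) \<le> 2))"
proof
  assume "cutwidth_le2 V E"
  then obtain f where f: "bij_betw f V {1..card V}"
    and cw: "\<forall>i. 1 \<le> i \<and> i < card V \<longrightarrow> card (cut_edges f E i) \<le> 2"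
    unfolding cutwidth_le2_def cut_edges_def by blast
  have range: "\<forall>v\<in>V. 1 \<le> f v \<and> f v \<le> card V"
    using f unfolding bij_betw_def by auto
  have "card (cut_edges f E i) \<le> 2" for i
    using cw cut_edges_outside[OF assms range, of i] by (cases "1 \<le> i \<and> i < card V") auto
  with f show "\<exists>f. bij_betw f V {1..card V} \<and> (\<forall>i. card (cut_edges f E i) \<le> 2)" by blast
qed (auto simp: cutwidth_le2_def cut_edges_def)

lemma rank_order_iso:
  fixes f :: "'a \<Rightarrow> 'b::linorder"
  assumes fin: "finite V" and inj: "inj_on f V"
  defines "g \<equiv> \<lambda>v. card {u \<in> V. f u \<le> f v}"
  shows "bij_betw g V {1..card V}" and "\<And>u v. u \<in> V \<Longrightarrow> v \<in> V \<Longrightarrow> g u \<le> g v \<longleftrightarrow> f u \<le> f v"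
proof -
  have less: "g u < g v" if "v \<in> V" "f u < f v" for u v
  proof -
    have "v \<in> {w \<in> V. f w \<le> f v}" "v \<notin> {w \<in> V. f w \<le> f u}" using that by auto
    moreover have "{w \<in> V. f w \<le> f u} \<subseteq> {w \<in> V. f w \<le> f v}"
      using that by (auto intro: order_trans)
    ultimately have "{w \<in> V. f w \<le> f u} \<subset> {w \<in> V. f w \<le> f v}" by blast
    then show ?thesis unfolding g_def using fin by (simp add: psubset_card_mono)
  qed
  have le: "g u \<le> g v" if "f u \<le> f v" for u v
  proof -
    have "{w \<in> V. f w \<le> f u} \<subseteq> {w \<in> V. f w \<le> f v}"
      using that by (auto intro: order_trans)
    then show ?thesis unfolding g_def using fin by (simp add: card_mono)
  qed
  show iff: "g u \<le> g v \<longleftrightarrow> f u \<le> f v" if "u \<in> V" "v \<in> V" for u v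
    using less[OF that(1), of v] le[of u v] by (meson not_le)
  have inj_g: "inj_on g V"
  proof (rule inj_onI)
    fix x y assume "x \<in> V" "y \<in> V" "g x = g y"
    then have "f x = f y" using iff[of x y] iff[of y x] by simp
    then show "x = y" using inj \<open>x \<in> V\<close> \<open>y \<in> V\<close> by (simp add: inj_on_eq_iff)
  qed
  have "g v \<in> {1..card V}" if "v \<in> V" for v
  proof -
    have "{u \<in> V. f u \<le> f v} \<noteq> {}" using that by blast
    then have "1 \<le> g v" unfolding g_def using fin by (simp add: Suc_le_eq card_gt_0_iff)
    moreover have "g v \<le> card V" unfolding g_def using fin by (intro card_mono) auto
    ultimately show ?thesis by simp
  qed
  then have "g ` V \<subseteq> {1..card V}" by blast
  moreover have "card (g ` V) = card V"
    using card_image[OF inj_g] .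
  ultimately have "g ` V = {1..card V}"
    by (intro card_subset_eq) auto
  with inj_g show "bij_betw g V {1..card V}"
    unfolding bij_betw_def by blast
qed

lemma width2_layout_imp_cutwidth_le2:
  assumes g: "graph V E" and l: "width2_layout V E f"
  shows "cutwidth_le2 V E"
proof -
  define h where "h v = card {u \<in> V. f u \<le> f v}" for v
  have fin: "finite V" using g unfolding graph_def by simp
  have inj: "inj_on f V" using l unfolding width2_layout_def by simp
  have bij: "bij_betw h V {1..card V}"
    and ord: "\<And>u v. u \<in> V \<Longrightarrow> v \<in> V \<Longrightarrow> h u \<le> h v \<longleftrightarrow> f u \<le> f v"
    using rank_order_iso[OF fin inj] unfolding h_def by blast+
  have "card (cut_edges h E i) \<le> 2" if "1 \<le> i" "i < card V" for i
  proof -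
    have "i \<in> h ` V" using bij that unfolding bij_betw_def by simp
    then obtain w where w: "w \<in> V" "h w = i" by blast
    have "\<forall>u\<in>V. h u \<le> i \<longleftrightarrow> f u \<le> f w" using w ord by blast
    then have "cut_edges h E i = cut_edges f E (f w)"
      using graph_edge_subset[OF g] by (intro cut_edges_cong) auto
    then show ?thesis using l unfolding width2_layout_def by simp
  qed
  with bij show ?thesis unfolding cutwidth_le2_def cut_edges_def by blast
qed

lemma width2_layout_subgraph:
  assumes "width2_layout V E f" "subgraph V' E' V E" "graph V E"
  shows "width2_layout V' E' f"
proof -
  have "card (cut_edges f E' i) \<le> card (cut_edges f E i)" for i
    using assms(2,3) by (intro card_mono finite_cut_edges graph_finite_edges cut_edges_mono)
      (auto simp: subgraph_def)
  with assms show ?thesis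
    unfolding width2_layout_def subgraph_def by (meson inj_on_subset order_trans)
qed

lemma width2_layout_graph_iso:
  assumes g: "graph V E" and g': "graph V' E'" and iso: "graph_iso V E V' E'"
    and l: "width2_layout V' E' h"
  shows "\<exists>f. width2_layout V E f"
proof -
  obtain b where b: "bij_betw b V V'" and edges: "\<forall>u\<in>V. \<forall>v\<in>V. {u, v} \<in> E \<longleftrightarrow> {b u, b v} \<in> E'"
    using iso unfolding graph_iso_def by blast
  have "card (cut_edges (h \<circ> b) E i) \<le> card (cut_edges h E' i)" for i
  proof (rule card_inj_on_le[where f = "image b"])
    show "inj_on (image b) (cut_edges (h \<circ> b) E i)"
      using b graph_edge_subset[OF g]
      by (intro inj_onI) (auto simp: cut_edges_def bij_betw_def inj_on_image_eq_iff)
    show "image b ` cut_edges (h \<circ> b) E i \<subseteq> cut_edges h E' i"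
    proof
      fix y assume "y \<in> image b ` cut_edges (h \<circ> b) E i"
      then obtain e where e: "e \<in> cut_edges (h \<circ> b) E i" "y = b ` e" by blast
      then have "e \<in> E" unfolding cut_edges_def by simp
      then obtain u v where "e = {u, v}" "u \<in> V" "v \<in> V" using g by (blast elim: graph_edgeE)
      with e edges show "y \<in> cut_edges h E' i" unfolding cut_edges_def by auto
    qed
    show "finite (cut_edges h E' i)" using g' by (simp add: finite_cut_edges graph_finite_edges)
  qed
  moreover have "inj_on (h \<circ> b) V"
    using l b unfolding width2_layout_def bij_betw_def by (simp add: comp_inj_on)
  ultimately show ?thesis
    using l unfolding width2_layout_def by (meson order_trans)
qed

text \<open>Room for a new vertex \<open>w\<close> right after \<open>u\<close>: positions are doubled and \<open>w\<close> is put at the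
  odd position following \<open>u\<close>.\<close>

definition place_after :: "('a \<Rightarrow> nat) \<Rightarrow> 'a \<Rightarrow> 'a \<Rightarrow> 'a \<Rightarrow> nat" where
  "place_after f u w x = (if x = w then 2 * f u + 3 else 2 * f x + 2)"

lemma inj_on_place_after: "inj_on f V \<Longrightarrow> w \<notin> V \<Longrightarrow> inj_on (place_after f u w) (insert w V)"
proof -
  have "2 * a \<noteq> Suc (2 * b)" "Suc (2 * b) \<noteq> 2 * a" for a b :: nat by presburger+
  then show "inj_on f V \<Longrightarrow> w \<notin> V \<Longrightarrow> ?thesis"
    unfolding place_after_def inj_on_def by auto
qed

lemma cut_edges_place_after_old:
  assumes "e \<in> E" "w \<notin> e" "e \<in> cut_edges (place_after f u w) E' j"
  shows "e \<in> cut_edges f E ((j - 2) div 2)"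
proof -
  have below: "place_after f u w x \<le> j \<longleftrightarrow> 2 \<le> j \<and> f x \<le> (j - 2) div 2" if "x \<noteq> w" for x
    using that unfolding place_after_def by presburger
  obtain a b where "a \<in> e" "b \<in> e" "place_after f u w a \<le> j" "j < place_after f u w b"
    using assms(3) unfolding cut_edges_def by blast
  moreover from this have "a \<noteq> w" "b \<noteq> w" using assms(2) by auto
  ultimately have "f a \<le> (j - 2) div 2" "(j - 2) div 2 < f b" using below[of a] below[of b] by auto
  with \<open>a \<in> e\<close> \<open>b \<in> e\<close> assms(1) show ?thesis unfolding cut_edges_def by blast
qed

lemma cut_edges_place_after_new:
  assumes "u \<noteq> w" "v \<noteq> w" "f u < f v"
  shows "{u, w} \<in> cut_edges (place_after f u w) E' j \<Longrightarrow> j = 2 * f u + 2"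
    and "{w, v} \<in> cut_edges (place_after f u w) E' j \<Longrightarrow> 2 * f u + 3 \<le> j \<and> j < 2 * f v + 2"
  using assms unfolding doubleton_in_cut_edges place_after_def by auto

text \<open>Placing the new vertex of a subdivided edge \<open>uv\<close> right after \<open>u\<close> (where \<open>f u < f v\<close>):
  \<open>uw\<close> only crosses the gap right after \<open>u\<close>, \<open>wv\<close> only gaps crossed by \<open>uv\<close>, and the two never
  cross the same gap; so replacing both by \<open>uv\<close> is injective on each cut.\<close>

lemma card_cut_edges_subdivide_edge:
  assumes g: "graph V E" and uv: "{u, v} \<in> E" and w: "w \<notin> V" and lt: "f u < f v"
  shows "card (cut_edges (place_after f u w) (E - {{u, v}} \<union> {{u, w}, {w, v}}) j)
    \<le> card (cut_edges f E ((j - 2) div 2))"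
proof -
  define C where "C = cut_edges (place_after f u w) (E - {{u, v}} \<union> {{u, w}, {w, v}}) j"
  define j' where "j' = (j - 2) div 2"
  have uV: "u \<in> V" "v \<in> V" using graph_doubleton_edge[OF g uv] by auto
  then have uw: "u \<noteq> w" "v \<noteq> w" using w by auto
  have wE: "w \<notin> e" if "e \<in> E" for e using graph_edge_subset[OF g that] w by auto
  have new: "e = {u, w} \<or> e = {w, v}" if "e \<in> C" "w \<in> e" for e
    using that wE unfolding C_def cut_edges_def by blast
  have new_uv: "{u, v} \<in> cut_edges f E j'" if "e \<in> C" "w \<in> e" for e
  proof -
    from new[OF that] have "f u \<le> j' \<and> j' < f v"
    proof
      assume "e = {u, w}"
      then have "j = 2 * f u + 2" using that(1) cut_edges_place_after_new(1)[OF uw lt] unfolding C_def by simp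
      then show ?thesis using lt unfolding j'_def by simp
    next
      assume "e = {w, v}"
      then have "2 * f u + 3 \<le> j" "j < 2 * f v + 2"
        using that(1) cut_edges_place_after_new(2)[OF uw lt] unfolding C_def by auto
      then show ?thesis unfolding j'_def by presburger
    qed
    then show ?thesis using uv unfolding doubleton_in_cut_edges by simp
  qed
  define \<phi> where "\<phi> e = (if w \<in> e then {u, v} else e)" for e
  show ?thesis
    unfolding C_def[symmetric] j'_def[symmetric]
  proof (rule card_inj_on_le[where f = \<phi>])
    show "finite (cut_edges f E j')" using g by (simp add: finite_cut_edges graph_finite_edges)
    show "\<phi> ` C \<subseteq> cut_edges f E j'"
    proof
      fix y assume "y \<in> \<phi> ` C"
      then obtain e where e: "e \<in> C" "y = \<phi> e" by blast
      show "y \<in> cut_edges f E j'"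
      proof (cases "w \<in> e")
        case True
        then show ?thesis using e new_uv unfolding \<phi>_def by simp
      next
        case False
        then have "e \<in> E" using e(1) unfolding C_def cut_edges_def by blast
        then show ?thesis using e False cut_edges_place_after_old unfolding \<phi>_def C_def j'_def by simp
      qed
    qed
    have "\<not> ({u, w} \<in> C \<and> {w, v} \<in> C)"
      using cut_edges_place_after_new[OF uw lt] unfolding C_def by fastforce
    moreover have "{u, v} \<notin> C" using uV uw unfolding C_def cut_edges_def by (auto simp: doubleton_eq_iff)
    ultimately show "inj_on \<phi> C"
      using new unfolding \<phi>_def inj_on_def by (metis (no_types, lifting) insertCI)
  qed
qed

lemma width2_layout_subdiv_step:
  assumes g: "graph V E" and l: "width2_layout V E f" and s: "subdiv_step V E V' E'"
  shows "\<exists>f'. width2_layout V' E' f'"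
proof -
  have main: "width2_layout (insert w V) (E - {{u, v}} \<union> {{u, w}, {w, v}}) (place_after f u w)"
    if uv: "{u, v} \<in> E" and w: "w \<notin> V" and lt: "f u < f v" for u v w
    using l card_cut_edges_subdivide_edge[OF g uv w lt] inj_on_place_after[OF _ w]
    unfolding width2_layout_def by (meson order_trans)
  obtain u v w where uv: "{u, v} \<in> E" "u \<noteq> v" and w: "w \<notin> V" and V': "V' = insert w V"
    and E': "E' = E - {{u, v}} \<union> {{u, w}, {w, v}}"
    using s unfolding subdiv_step_def by blast
  have "f u \<noteq> f v"
    using l uv graph_doubleton_edge[OF g uv(1)] unfolding width2_layout_def by (auto dest: inj_onD)
  then consider "f u < f v" | "f v < f u" by linarith
  then show ?thesis
  proof cases
    case 1
    then show ?thesis using main[OF uv(1) w] V' E' by blast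
  next
    case 2
    have "{v, u} \<in> E" using uv(1) by (simp add: insert_commute)
    moreover have "E' = E - {{v, u}} \<union> {{v, w}, {w, u}}" using E' by (auto simp: insert_commute)
    ultimately show ?thesis using main[OF _ w 2] V' by blast
  qed
qed

lemma width2_layout_subdivision:
  "subdivision V E V' E' \<Longrightarrow> graph V E \<Longrightarrow> width2_layout V E f \<Longrightarrow> \<exists>f'. width2_layout V' E' f'"
proof (induction arbitrary: f rule: subdivision.induct)
  case (step V E V1 E1 V2 E2)
  then show ?case using width2_layout_subdiv_step subdivision_graph by meson
qed blast

lemma width2_layout_unsubdiv_step:
  assumes g: "graph V E" and s: "subdiv_step V E V' E'" and l: "width2_layout V' E' f"
  shows "width2_layout V E f"
proof -
  obtain u v w where uv: "{u, v} \<in> E" and w: "w \<notin> V" and V': "V' = insert w V"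
    and E': "E' = E - {{u, v}} \<union> {{u, w}, {w, v}}"
    using s unfolding subdiv_step_def by blast
  have wE: "w \<notin> e" if "e \<in> E" for e using graph_edge_subset[OF g that] w by auto
  have "card (cut_edges f E j) \<le> card (cut_edges f E' j)" for j
  proof -
    have split: "{u, w} \<in> cut_edges f E' j \<or> {w, v} \<in> cut_edges f E' j"
      if "{u, v} \<in> cut_edges f E j"
      using that E' unfolding doubleton_in_cut_edges by (cases "f w \<le> j") auto
    define \<phi> where "\<phi> e = (if e = {u, v} then
        (if {u, w} \<in> cut_edges f E' j then {u, w} else {w, v}) else e)" for e
    show ?thesis
    proof (rule card_inj_on_le[where f = \<phi>])
      show "finite (cut_edges f E' j)"
        using g E' by (simp add: finite_cut_edges graph_finite_edges)
      show "\<phi> ` cut_edges f E j \<subseteq> cut_edges f E' j"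
        using split E' unfolding \<phi>_def cut_edges_def by auto
      have "w \<in> \<phi> {u, v}" "w \<notin> \<phi> e" if "e \<in> cut_edges f E j" "e \<noteq> {u, v}" for e
        using that wE unfolding \<phi>_def cut_edges_def by auto
      then show "inj_on \<phi> (cut_edges f E j)"
        unfolding inj_on_def by (metis \<phi>_def)
    qed
  qed
  with l V' show ?thesis unfolding width2_layout_def by (meson inj_on_subset order_trans subset_insertI)
qed

lemma width2_layout_unsubdivision:
  "subdivision V E V' E' \<Longrightarrow> graph V E \<Longrightarrow> width2_layout V' E' f \<Longrightarrow> width2_layout V E f"
proof (induction rule: subdivision.induct)
  case (step V E V1 E1 V2 E2)
  then show ?case using width2_layout_unsubdiv_step subdivision_graph by meson
qed

section \<open>A layout of \<open>G_n\<close>\<close>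

lemma GE_cases:
  assumes "e \<in> GE n"
  obtains (path) i where "e = {3 * i, 3 * (i + 1)}" "1 \<le> i" "i < n"
    | (pendant1) i where "e = {3 * i, 3 * i + 1}" "2 \<le> i" "i + 1 \<le> n"
    | (pendant2) i where "e = {3 * i, 3 * i + 2}" "2 \<le> i" "i + 1 \<le> n"
  using assms unfolding GE_def by blast

lemma GV_memI:
  "1 \<le> i \<Longrightarrow> i \<le> n \<Longrightarrow> 3 * i \<in> GV n"
  "2 \<le> i \<Longrightarrow> i + 1 \<le> n \<Longrightarrow> 3 * i + 1 \<in> GV n"
  "2 \<le> i \<Longrightarrow> i + 1 \<le> n \<Longrightarrow> 3 * i + 2 \<in> GV n"
  unfolding GV_def by blast+

lemma GV_le: "y \<in> GV n \<Longrightarrow> y \<le> 3 * n + 2"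
  unfolding GV_def by auto

lemma graph_G: "graph (GV n) (GE n)"
proof -
  have "GV n \<subseteq> {..3 * n + 2}" unfolding GV_def by auto
  then have "finite (GV n)" by (rule finite_subset) simp
  moreover have "\<exists>u v. e = {u, v} \<and> u \<noteq> v \<and> u \<in> GV n \<and> v \<in> GV n" if "e \<in> GE n" for e
    using that
  proof (cases rule: GE_cases)
    case (path i)
    then show ?thesis using GV_memI(1)[of i n] GV_memI(1)[of "i + 1" n]
      by (intro exI[of _ "3 * i"] exI[of _ "3 * (i + 1)"]) auto
  next
    case (pendant1 i)
    then show ?thesis using GV_memI(1,2)[of i n] by (intro exI[of _ "3 * i"] exI[of _ "3 * i + 1"]) auto
  next
    case (pendant2 i)
    then show ?thesis using GV_memI(1,3)[of i n] by (intro exI[of _ "3 * i"] exI[of _ "3 * i + 2"]) auto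
  qed
  ultimately show ?thesis unfolding graph_def by blast
qed

text \<open>The path vertex \<open>3 i\<close> goes to position \<open>3 i + 2\<close>, between its pendants \<open>3 i + 1\<close> and
  \<open>3 i + 2\<close> at positions \<open>3 i + 1\<close> and \<open>3 i + 3\<close>. So a path edge crosses three consecutive gaps,
  no two path edges cross the same gap, and each pendant edge crosses a single gap of its own.\<close>

definition G_layout :: "nat \<Rightarrow> nat" where
  "G_layout x = x + (if x mod 3 = 0 then 2 else if x mod 3 = 1 then 0 else 1)"

lemma G_layout_simps:
  "G_layout (3 * i) = 3 * i + 2" "G_layout (3 * i + 1) = 3 * i + 1" "G_layout (3 * i + 2) = 3 * i + 3"
  unfolding G_layout_def by presburger+

lemma G_layout_cases:
  obtains q where "x = 3 * q" "G_layout x = 3 * q + 2"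
  | q where "x = 3 * q + 1" "G_layout x = 3 * q + 1"
  | q where "x = 3 * q + 2" "G_layout x = 3 * q + 3"
proof -
  define q where "q = x div 3"
  have "x = 3 * q \<or> x = 3 * q + 1 \<or> x = 3 * q + 2" unfolding q_def by presburger
  then show ?thesis using that G_layout_simps[of q] by blast
qed

lemma inj_G_layout: "inj G_layout"
proof (rule injI)
  fix x y assume "G_layout x = G_layout y"
  then show "x = y"
    by (cases x rule: G_layout_cases; cases y rule: G_layout_cases; simp; presburger)
qed

lemma card_le_Suc0_if_eq: "finite A \<Longrightarrow> (\<And>a b. a \<in> A \<Longrightarrow> b \<in> A \<Longrightarrow> a = b) \<Longrightarrow> card A \<le> 1"
  unfolding One_nat_def by (subst card_le_Suc0_iff_eq) blast+

lemma G_path_edge_cut: "{3 * i, 3 * (i + 1)} \<in> cut_edges G_layout X j \<Longrightarrow> 3 * i + 2 \<le> j \<and> j < 3 * i + 5"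
  using G_layout_simps(1)[of i] G_layout_simps(1)[of "i + 1"] unfolding doubleton_in_cut_edges by auto

lemma G_pendant_edge_cut:
  assumes "e \<in> cut_edges G_layout (GE n) j" "\<nexists>i. e = {3 * i, 3 * (i + 1)}"
  shows "\<exists>i c. e = {3 * i, 3 * i + c} \<and> j = 3 * i + c \<and> c \<in> {1, 2}"
proof -
  from assms(1) have "e \<in> GE n" unfolding cut_edges_def by blast
  then show ?thesis
  proof (cases rule: GE_cases)
    case (path i)
    then show ?thesis using assms(2) by blast
  next
    case (pendant1 i)
    then have "{3 * i, 3 * i + 1} \<in> cut_edges G_layout (GE n) j" using assms(1) by simp
    then have "j = 3 * i + 1" using G_layout_simps(1,2)[of i] unfolding doubleton_in_cut_edges by auto
    with pendant1 show ?thesis by blast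
  next
    case (pendant2 i)
    then have "{3 * i, 3 * i + 2} \<in> cut_edges G_layout (GE n) j" using assms(1) by simp
    then have "j = 3 * i + 2" using G_layout_simps(1,3)[of i] unfolding doubleton_in_cut_edges by auto
    with pendant2 show ?thesis by blast
  qed
qed

lemma width2_layout_G: "width2_layout (GV n) (GE n) G_layout"
proof -
  have "card (cut_edges G_layout (GE n) j) \<le> 2" for j
  proof -
    define C where "C = cut_edges G_layout (GE n) j"
    define P where "P = {e \<in> C. \<exists>i. e = {3 * i, 3 * (i + 1)}}"
    have fin: "finite C" unfolding C_def by (intro finite_cut_edges graph_finite_edges[OF graph_G])
    have "card P \<le> 1"
    proof (rule card_le_Suc0_if_eq)
      show "finite P" using fin unfolding P_def by simp
      fix a b assume "a \<in> P" "b \<in> P"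
      then obtain i i' where "a = {3 * i, 3 * (i + 1)}" "b = {3 * i', 3 * (i' + 1)}"
        "3 * i + 2 \<le> j \<and> j < 3 * i + 5" "3 * i' + 2 \<le> j \<and> j < 3 * i' + 5"
        using G_path_edge_cut unfolding P_def C_def by blast
      moreover from this have "i = i'" by linarith
      ultimately show "a = b" by simp
    qed
    moreover have "card (C - P) \<le> 1"
    proof (rule card_le_Suc0_if_eq)
      show "finite (C - P)" using fin by simp
      have pendant: "\<exists>i c. e = {3 * i, 3 * i + c} \<and> j = 3 * i + c \<and> c \<in> {1, 2}" if "e \<in> C - P" for e
        using that G_pendant_edge_cut unfolding P_def C_def by blast
      fix a b assume "a \<in> C - P" "b \<in> C - P"
      then obtain i c i' c' where "a = {3 * i, 3 * i + c}" "b = {3 * i', 3 * i' + c'}"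
        "j = 3 * i + c" "j = 3 * i' + c'" "c \<in> {1, 2}" "c' \<in> {1, 2}"
        using pendant by meson
      moreover have "i = i' \<and> c = c'"
        using \<open>j = 3 * i + c\<close> \<open>j = 3 * i' + c'\<close> \<open>c \<in> {1, 2}\<close> \<open>c' \<in> {1, 2}\<close>
        by auto presburger+
      ultimately show "a = b" by simp
    qed
    moreover have "C = P \<union> (C - P)" unfolding P_def by blast
    then have "card C \<le> card P + card (C - P)" by (metis card_Un_le)
    ultimately show ?thesis unfolding C_def by linarith
  qed
  then show ?thesis using inj_G_layout unfolding width2_layout_def by (blast intro: inj_on_subset)
qed

theorem cutwidth_le2_if_embeds_in_homeomorph_of_G:
  assumes g: "graph V E" and h: "homeomorphic HV HE (GV n) (GE n)"
    and sg: "subgraph V' E' HV HE" and iso: "graph_iso V E V' E'"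
  shows "cutwidth_le2 V E"
proof -
  obtain S1 F1 S2 F2 where gH: "graph HV HE"
    and s1: "subdivision HV HE S1 F1" and s2: "subdivision (GV n) (GE n) S2 F2"
    and i: "graph_iso S1 F1 S2 F2"
    using h unfolding homeomorphic_def by blast
  obtain f2 where "width2_layout S2 F2 f2"
    using width2_layout_subdivision[OF s2 graph_G width2_layout_G] by blast
  then obtain f1 where "width2_layout S1 F1 f1"
    using width2_layout_graph_iso subdivision_graph s1 s2 gH graph_G i by metis
  then have "width2_layout V' E' f1"
    using width2_layout_unsubdivision[OF s1 gH] width2_layout_subgraph[OF _ sg gH] by blast
  then obtain f where "width2_layout V E f"
    using width2_layout_graph_iso[OF g _ iso] sg unfolding subgraph_def by blast
  then show ?thesis by (rule width2_layout_imp_cutwidth_le2[OF g])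
qed

section \<open>The spine of a layout of width two\<close>

lemma chain_less:
  fixes h :: "nat \<Rightarrow> 'b::order"
  assumes "\<forall>i<s. h i < h (Suc i)" "i < j" "j \<le> s"
  shows "h i < h j"
  using assms(2,3)
proof (induction j)
  case (Suc j)
  have "h j < h (Suc j)" using assms(1) Suc.prems by simp
  then show ?case using Suc by (cases "i < j") (auto dest: less_trans, metis less_SucE)
qed simp

lemma crossing_step:
  fixes h :: "nat \<Rightarrow> nat"
  assumes "h s \<le> i" "i < h t" "s \<le> t"
  obtains k where "s \<le> k" "k < t" "h k \<le> i" "i < h (Suc k)"
proof -
  have "\<exists>k. s \<le> k \<and> k < t \<and> h k \<le> i \<and> i < h (Suc k)"
    using assms(2,3)
  proof (induction t)
    case (Suc t)
    show ?case
    proof (cases "h t \<le> i")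
      case True
      have "s \<noteq> Suc t" using assms(1) Suc.prems(1) by auto
      with True Suc.prems show ?thesis by (auto intro: exI[of _ t])
    next
      case False
      with Suc have "s \<le> t" by (metis le_SucE not_le assms(1))
      with False Suc.IH show ?thesis by (auto intro: less_SucI)
    qed
  qed (use assms(1) in simp)
  then show ?thesis using that by blast
qed

lemma walk_shortcut:
  assumes walk: "\<forall>l<s. {q l, q (Suc l)} \<in> E" and ij: "i < j" "j \<le> s" "q i = q j"
  shows "\<exists>q'. q' 0 = q 0 \<and> q' (s - (j - i)) = q s \<and> (\<forall>l<s - (j - i). {q' l, q' (Suc l)} \<in> E)"
proof (intro exI conjI)
  define q' where "q' l = (if l \<le> i then q l else q (l + (j - i)))" for l
  show "q' 0 = q 0" unfolding q'_def by simp
  show "q' (s - (j - i)) = q s"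
    using ij unfolding q'_def by (cases "s = j") simp_all
  show "\<forall>l<s - (j - i). {q' l, q' (Suc l)} \<in> E"
  proof (intro allI impI)
    fix l assume l: "l < s - (j - i)"
    consider "l < i" | "l = i" | "i < l" by linarith
    then show "{q' l, q' (Suc l)} \<in> E"
    proof cases
      case 2
      then have "{q' l, q' (Suc l)} = {q j, q (Suc j)}" using ij unfolding q'_def by auto
      then show ?thesis using walk l 2 ij by auto
    qed (use walk l in \<open>auto simp: q'_def\<close>)
  qed
qed

lemma adj_rel_rtrancl_walk:
  assumes "(a, b) \<in> (adj_rel E)\<^sup>*"
  shows "\<exists>q s. q 0 = a \<and> q s = b \<and> (\<forall>i<s. {q i, q (Suc i)} \<in> E)"
  using assms
proof (induction rule: rtrancl_induct)
  case base
  show ?case by (rule exI[of _ "\<lambda>_. a"], rule exI[of _ 0]) simp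
next
  case (step b c)
  then obtain q s where q: "q 0 = a" "q s = b" "\<forall>i<s. {q i, q (Suc i)} \<in> E" by blast
  have "{b, c} \<in> E" using step(2) unfolding adj_rel_def by simp
  with q have "(q(Suc s := c)) 0 = a \<and> (q(Suc s := c)) (Suc s) = c \<and>
      (\<forall>i<Suc s. {(q(Suc s := c)) i, (q(Suc s := c)) (Suc i)} \<in> E)"
    by (auto simp: less_Suc_eq)
  then show ?case by blast
qed

lemma adj_rel_rtrancl_path:
  assumes "(a, b) \<in> (adj_rel E)\<^sup>*"
  shows "\<exists>q s. q 0 = a \<and> q s = b \<and> (\<forall>i<s. {q i, q (Suc i)} \<in> E) \<and> inj_on q {..s}"
proof -
  define W where "W s \<longleftrightarrow> (\<exists>q. q 0 = a \<and> q s = b \<and> (\<forall>i<s. {q i, q (Suc i)} \<in> E))" for s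
  define s where "s = (LEAST s. W s)"
  have "\<exists>s. W s" using adj_rel_rtrancl_walk[OF assms] unfolding W_def by blast
  then have "W s" unfolding s_def by (rule LeastI_ex)
  then obtain q where q: "q 0 = a" "q s = b" "\<forall>i<s. {q i, q (Suc i)} \<in> E" unfolding W_def by blast
  have "inj_on q {..s}"
  proof (rule ccontr)
    assume "\<not> inj_on q {..s}"
    then obtain x y where xy: "x \<le> s" "y \<le> s" "q x = q y" "x \<noteq> y" unfolding inj_on_def by blast
    have "\<exists>i j. i < j \<and> j \<le> s \<and> q i = q j"
    proof (cases "x < y")
      case True
      then show ?thesis using xy by blast
    next
      case False
      then have "y < x" using xy(4) by simp
      then show ?thesis using xy by (intro exI[of _ y] exI[of _ x]) simp
    qed
    then obtain i j where ij: "i < j" "j \<le> s" "q i = q j" by blast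
    from walk_shortcut[OF q(3) ij] q have "W (s - (j - i))" unfolding W_def by simp
    moreover have "s - (j - i) < s" using ij by simp
    ultimately show False unfolding s_def by (meson not_less_Least)
  qed
  with q show ?thesis by blast
qed

lemma walk_edges_distinct:
  assumes "inj_on q {..s}" "k < s" "k' < s" "k \<noteq> k'"
  shows "{q k, q (Suc k)} \<noteq> {q k', q (Suc k')}"
proof
  assume "{q k, q (Suc k)} = {q k', q (Suc k')}"
  then have "k = k' \<or> k = Suc k' \<and> Suc k = k'"
    using assms(1-3) by (auto simp: doubleton_eq_iff inj_on_def)
  then show False using assms(4) by linarith
qed

text \<open>A path whose first and last vertex are leftmost and rightmost among its vertices must be
  increasing in a layout of width \<open>2\<close>: a step backwards over a gap would be joined by one edge
  crossing that gap before it and one after it.\<close>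

lemma path_increasing_if_width2:
  assumes fin: "finite E" and cw: "\<forall>i. card (cut_edges f E i) \<le> 2"
    and walk: "\<forall>i<s. {q i, q (Suc i)} \<in> E" and inj: "inj_on q {..s}"
    and inj_f: "inj_on f (q ` {..s})"
    and ends: "\<forall>k\<le>s. f (q 0) \<le> f (q k) \<and> f (q k) \<le> f (q s)"
    and j: "j < s"
  shows "f (q j) < f (q (Suc j))"
proof (rule ccontr)
  assume "\<not> f (q j) < f (q (Suc j))"
  moreover have "q j \<noteq> q (Suc j)" using inj j unfolding inj_on_def by fastforce
  then have "f (q j) \<noteq> f (q (Suc j))" using inj_f j unfolding inj_on_def by fastforce
  ultimately have descent: "f (q (Suc j)) < f (q j)" by simp
  define i where "i = f (q (Suc j))"
  have cross: "{q k, q (Suc k)} \<in> cut_edges f E i" if "k < s" "f (q k) \<le> i" "i < f (q (Suc k))" for k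
    using walk that unfolding cut_edges_def by blast
  have "(f \<circ> q) 0 \<le> i" "i < (f \<circ> q) j" using ends j descent unfolding i_def by auto
  then obtain k where k: "k < j" "f (q k) \<le> i" "i < f (q (Suc k))"
    by (rule crossing_step) auto
  have "f (q j) \<le> f (q s)" using ends j by simp
  then have "(f \<circ> q) (Suc j) \<le> i" "i < (f \<circ> q) s" using descent unfolding i_def by auto
  then obtain k' where k': "Suc j \<le> k'" "k' < s" "f (q k') \<le> i" "i < f (q (Suc k'))"
    by (rule crossing_step) (use j in auto)
  have "{q j, q (Suc j)} \<in> cut_edges f E i"
    using walk j descent unfolding i_def doubleton_in_cut_edges by simp
  then have "{{q k, q (Suc k)}, {q j, q (Suc j)}, {q k', q (Suc k')}} \<subseteq> cut_edges f E i"
    using cross k k' j by simp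
  then have "card {{q k, q (Suc k)}, {q j, q (Suc j)}, {q k', q (Suc k')}} \<le> 2"
    using cw card_mono[OF finite_cut_edges[OF fin]] by (meson order_trans)
  moreover have "card {{q k, q (Suc k)}, {q j, q (Suc j)}, {q k', q (Suc k')}} = 3"
    using walk_edges_distinct[OF inj, of k j] walk_edges_distinct[OF inj, of k k']
      walk_edges_distinct[OF inj, of j k'] k k' j by (simp add: card_insert_if)
  ultimately show False by simp
qed

lemma walk_in_vertices:
  assumes g: "graph V E" and walk: "\<forall>i<s. {q i, q (Suc i)} \<in> E" and "0 < s" "i \<le> s"
  shows "q i \<in> V"
proof (cases "i < s")
  case True
  then have "{q i, q (Suc i)} \<in> E" using walk by blast
  then show ?thesis using graph_doubleton_edge[OF g] by simp
next
  case False
  obtain t where "s = Suc t" using \<open>0 < s\<close> by (cases s) auto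
  then have "{q t, q i} \<in> E" using walk \<open>i \<le> s\<close> False by simp
  then show ?thesis using graph_doubleton_edge[OF g] by simp
qed

lemma increasing_spine_exists:
  assumes g: "graph V E" and conn: "connected_graph V E" and ne: "V \<noteq> {}"
    and f: "bij_betw f V {1..card V}" and cw: "\<forall>i. card (cut_edges f E i) \<le> 2"
  obtains p r where "\<forall>i\<le>r. p i \<in> V" "\<forall>i<r. {p i, p (Suc i)} \<in> E"
    "\<forall>i<r. f (p i) < f (p (Suc i))" "f (p 0) = 1" "f (p r) = card V"
proof -
  have "1 \<le> card V" using g ne unfolding graph_def by (simp add: Suc_le_eq card_gt_0_iff)
  then have "1 \<in> f ` V" "card V \<in> f ` V" using f unfolding bij_betw_def by auto
  then obtain a b where a: "a \<in> V" "f a = 1" and b: "b \<in> V" "f b = card V"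
    by (metis imageE)
  have ab: "(a, b) \<in> (adj_rel E)\<^sup>*" using conn a b unfolding connected_graph_def by blast
  obtain q s where q: "q 0 = a" "q s = b" "\<forall>i<s. {q i, q (Suc i)} \<in> E"
    and inj: "inj_on q {..s}"
    using adj_rel_rtrancl_path[OF ab] by blast
  have qV: "q i \<in> V" if "i \<le> s" for i
    using walk_in_vertices[OF g q(3) _ that] that q(1) a by (cases "s = 0") auto
  have "f (q i) \<in> {1..card V}" if "i \<le> s" for i using qV[OF that] f unfolding bij_betw_def by auto
  then have "\<forall>k\<le>s. f (q 0) \<le> f (q k) \<and> f (q k) \<le> f (q s)" using q a b by auto
  moreover have "inj_on f (q ` {..s})"
    using f qV unfolding bij_betw_def by (auto intro: inj_on_subset)
  ultimately have "\<forall>j<s. f (q j) < f (q (Suc j))"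
    using path_increasing_if_width2[OF graph_finite_edges[OF g] cw q(3) inj] by blast
  then show ?thesis using that[where p = q and r = s] qV q a b by auto
qed

text \<open>The closed walk that runs along \<open>a\<close> from \<open>a 0\<close> to \<open>a d\<close> and then back along \<open>c\<close> from
  \<open>c (t - 1)\<close> down to \<open>c 1\<close>; it is a cycle when \<open>c\<close> leads from \<open>a 0\<close> to \<open>a d\<close>.\<close>

definition cycle_walk :: "(nat \<Rightarrow> 'a) \<Rightarrow> nat \<Rightarrow> (nat \<Rightarrow> 'a) \<Rightarrow> nat \<Rightarrow> nat \<Rightarrow> 'a" where
  "cycle_walk a d c t i = (if i \<le> d then a i else c (t + d - i))"

lemma inj_on_cycle_walk:
  assumes "inj_on a {..d}" "inj_on c {..t}" "\<forall>i. 0 < i \<and> i < t \<longrightarrow> c i \<notin> a ` {..d}"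
  shows "inj_on (cycle_walk a d c t) {0..<d + t}"
proof (rule inj_onI)
  fix x y assume x: "x \<in> {0..<d + t}" and y: "y \<in> {0..<d + t}" and eq: "cycle_walk a d c t x = cycle_walk a d c t y"
  have returning: "cycle_walk a d c t i \<notin> a ` {..d}" if "d < i" "i < d + t" for i
    using that assms(3) unfolding cycle_walk_def by auto
  have outgoing: "cycle_walk a d c t i \<in> a ` {..d}" if "i \<le> d" for i
    using that unfolding cycle_walk_def by simp
  consider "x \<le> d" "y \<le> d" | "x \<le> d" "d < y" | "d < x" "y \<le> d" | "d < x" "d < y" by linarith
  then show "x = y"
  proof cases
    case 1
    then show ?thesis using eq assms(1) unfolding cycle_walk_def by (auto simp: inj_on_def)
  next
    case 2
    then show ?thesis using eq returning[of y] outgoing[of x] y by simp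
  next
    case 3
    then show ?thesis using eq returning[of x] outgoing[of y] x by simp
  next
    case 4
    then have "t + d - x = t + d - y" using eq x y assms(2) unfolding cycle_walk_def by (auto simp: inj_on_def)
    then show ?thesis using 4 x y by simp
  qed
qed

lemma cycle_walk_edge:
  assumes a: "\<forall>i<d. {a i, a (Suc i)} \<in> E" and c: "\<forall>i<t. {c i, c (Suc i)} \<in> E"
    and "c t = a d" and i: "i + 1 < d + t"
  shows "{cycle_walk a d c t i, cycle_walk a d c t (i + 1)} \<in> E"
proof -
  consider "i < d" | "i = d" | "d < i" by linarith
  then show ?thesis
  proof cases
    case 1
    then show ?thesis using a unfolding cycle_walk_def by simp
  next
    case 2
    then have "t - 1 < t" "cycle_walk a d c t i = c (Suc (t - 1))" "cycle_walk a d c t (i + 1) = c (t - 1)"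
      using i \<open>c t = a d\<close> unfolding cycle_walk_def by auto
    then show ?thesis using c by (metis insert_commute)
  next
    case 3
    then have "t + d - (i + 1) < t" "cycle_walk a d c t i = c (Suc (t + d - (i + 1)))"
      "cycle_walk a d c t (i + 1) = c (t + d - (i + 1))"
      using i unfolding cycle_walk_def by (auto simp: Suc_diff_Suc)
    then show ?thesis using c by (metis insert_commute)
  qed
qed

lemma cycle_of_two_paths:
  assumes a: "\<forall>i<d. {a i, a (Suc i)} \<in> E" "inj_on a {..d}" "a ` {..d} \<subseteq> V"
    and c: "\<forall>i<t. {c i, c (Suc i)} \<in> E" "inj_on c {..t}" "c ` {..t} \<subseteq> V"
    and ends: "c 0 = a 0" "c t = a d"
    and disjoint: "\<forall>i. 0 < i \<and> i < t \<longrightarrow> c i \<notin> a ` {..d}"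
    and t: "0 < t" and len: "3 \<le> d + t"
  shows "has_cycle V E"
proof -
  define xs where "xs = map (cycle_walk a d c t) [0..<d + t]"
  have "distinct xs" unfolding xs_def using inj_on_cycle_walk[OF a(2) c(2) disjoint] by (simp add: distinct_map)
  moreover have "set xs \<subseteq> V"
    using a(3) c(3) unfolding xs_def cycle_walk_def by (auto simp: image_subset_iff)
  moreover have "\<forall>i < length xs - 1. {xs ! i, xs ! (i + 1)} \<in> E"
    using cycle_walk_edge[OF a(1) c(1) ends(2)] unfolding xs_def by (simp del: upt_Suc)
  moreover have "{last xs, hd xs} \<in> E"
  proof -
    have "last [0..<d + t] = d + t - 1" using len by (intro last_upt) linarith
    then have "last xs = cycle_walk a d c t (d + t - 1)" using len unfolding xs_def by (subst last_map) auto
    also have "\<dots> = c 1" using t ends unfolding cycle_walk_def by (cases "t = 1") auto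
    finally have "last xs = c 1" .
    moreover have "hd xs = c 0" using ends t unfolding xs_def cycle_walk_def by (simp add: hd_map)
    ultimately show ?thesis using c(1) t by (simp add: insert_commute)
  qed
  moreover have "3 \<le> length xs" using len unfolding xs_def by simp
  ultimately show ?thesis unfolding has_cycle_def by blast
qed

section \<open>Off-spine vertices hang from the spine\<close>

locale width2_spine =
  fixes V :: "'a set" and E :: "'a set set" and f :: "'a \<Rightarrow> nat" and p :: "nat \<Rightarrow> 'a" and r :: nat
  assumes graph: "graph V E" and conn: "connected_graph V E" and acyclic: "\<not> has_cycle V E"
    and f_bij: "bij_betw f V {1..card V}" and width: "\<forall>i. card (cut_edges f E i) \<le> 2"
    and spine_in_V: "\<forall>i\<le>r. p i \<in> V" and spine_edge: "\<forall>i<r. {p i, p (Suc i)} \<in> E"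
    and spine_incr: "\<forall>i<r. f (p i) < f (p (Suc i))"
    and spine_first: "f (p 0) = 1" and spine_last: "f (p r) = card V"
begin

definition spine :: "'a set" where "spine = p ` {..r}"
definition spine_edges :: "'a set set" where "spine_edges = {{p i, p (Suc i)} | i. i < r}"
definition off_edges :: "'a set set" where "off_edges = E - spine_edges"

lemma finite_E: "finite E" using graph_finite_edges[OF graph] .

lemma f_inj: "x \<in> V \<Longrightarrow> y \<in> V \<Longrightarrow> f x = f y \<Longrightarrow> x = y"
  using f_bij unfolding bij_betw_def by (meson inj_onD)

lemma f_range: "x \<in> V \<Longrightarrow> 1 \<le> f x \<and> f x \<le> card V"
  using f_bij unfolding bij_betw_def by auto

lemma spine_less: "i < j \<Longrightarrow> j \<le> r \<Longrightarrow> f (p i) < f (p j)"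
  using chain_less[of r "f \<circ> p" i j] spine_incr by simp

lemma spine_less_iff: "i \<le> r \<Longrightarrow> j \<le> r \<Longrightarrow> f (p i) < f (p j) \<longleftrightarrow> i < j"
  using spine_less[of i j] spine_less[of j i] by (cases "i < j"; cases "j < i") auto

lemma spine_inj: "i \<le> r \<Longrightarrow> j \<le> r \<Longrightarrow> p i = p j \<Longrightarrow> i = j"
  using spine_less_iff[of i j] spine_less_iff[of j i] by (metis less_irrefl nat_neq_iff)

lemma in_spine_iff: "x \<in> spine \<longleftrightarrow> (\<exists>k\<le>r. x = p k)"
  unfolding spine_def by auto

lemma spine_vertex: "k \<le> r \<Longrightarrow> p k \<in> spine"
  unfolding spine_def by simp

lemma off_edge_ends: "{x, y} \<in> off_edges \<Longrightarrow> x \<in> V \<and> y \<in> V \<and> x \<noteq> y \<and> {x, y} \<in> E"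
  using graph_doubleton_edge[OF graph, of x y] unfolding off_edges_def by auto

lemma spine_edge_in_spine: "{x, y} \<in> spine_edges \<Longrightarrow> x \<in> spine"
  unfolding spine_edges_def by (auto simp: doubleton_eq_iff intro: spine_vertex)

lemma off_edge_if_off_spine: "{x, y} \<in> E \<Longrightarrow> x \<notin> spine \<Longrightarrow> {x, y} \<in> off_edges"
  using spine_edge_in_spine unfolding off_edges_def by blast

lemma off_edge_in_cut: "{x, y} \<in> off_edges \<Longrightarrow> f x \<le> i \<Longrightarrow> i < f y \<Longrightarrow> {x, y} \<in> cut_edges f off_edges i"
  unfolding cut_edges_def by blast

text \<open>The spine crosses every gap, so each gap is crossed by at most one further edge.\<close>

lemma card_cut_off_edges_le1: "card (cut_edges f off_edges i) \<le> 1"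
proof (cases "1 \<le> i \<and> i < card V")
  case True
  then have "(f \<circ> p) 0 \<le> i" "i < (f \<circ> p) r" using spine_first spine_last by auto
  then obtain k where k: "k < r" "f (p k) \<le> i" "i < f (p (Suc k))"
    by (rule crossing_step) auto
  define e where "e = {p k, p (Suc k)}"
  have "e \<in> cut_edges f E i" using spine_edge k unfolding e_def doubleton_in_cut_edges by simp
  moreover have "e \<notin> cut_edges f off_edges i"
    using k unfolding off_edges_def spine_edges_def e_def cut_edges_def by blast
  moreover have "cut_edges f off_edges i \<subseteq> cut_edges f E i"
    unfolding off_edges_def by (intro cut_edges_mono) blast
  ultimately have "insert e (cut_edges f off_edges i) \<subseteq> cut_edges f E i" by blast
  then have "card (insert e (cut_edges f off_edges i)) \<le> 2"
    using width card_mono[OF finite_cut_edges[OF finite_E]] by (meson order_trans)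
  then show ?thesis
    using \<open>e \<notin> cut_edges f off_edges i\<close> finite_cut_edges[OF finite_E, of f i]
      finite_subset[OF \<open>cut_edges f off_edges i \<subseteq> cut_edges f E i\<close>] by simp
next
  case False
  have "\<forall>v\<in>V. 1 \<le> f v \<and> f v \<le> card V" using f_range by blast
  then have "cut_edges f E i = {}" using cut_edges_outside[OF graph] False by blast
  then show ?thesis using cut_edges_mono[of off_edges E f i] unfolding off_edges_def by auto
qed

lemma cut_off_edges_unique: "e1 \<in> cut_edges f off_edges i \<Longrightarrow> e2 \<in> cut_edges f off_edges i \<Longrightarrow> e1 = e2"
  using card_cut_off_edges_le1[of i] finite_cut_edges[of off_edges f i] finite_E
  unfolding off_edges_def One_nat_def by (auto simp: card_le_Suc0_iff_eq)

lemma unique_right_off_neighbour: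
  assumes "{u, v1} \<in> off_edges" "{u, v2} \<in> off_edges" "f u < f v1" "f u < f v2"
  shows "v1 = v2"
proof -
  have "{u, v1} = {u, v2}"
    using assms off_edge_in_cut cut_off_edges_unique by blast
  then show ?thesis using off_edge_ends[OF assms(1)] by (auto simp: doubleton_eq_iff)
qed

lemma unique_left_off_neighbour:
  assumes "{u, v1} \<in> off_edges" "{u, v2} \<in> off_edges" "f v1 < f u" "f v2 < f u"
  shows "v1 = v2"
proof -
  have "{v1, u} \<in> off_edges" "{v2, u} \<in> off_edges" using assms(1,2) by (simp_all add: insert_commute)
  then have "{v1, u} \<in> cut_edges f off_edges (f u - 1)" "{v2, u} \<in> cut_edges f off_edges (f u - 1)"
    using assms(3,4) off_edge_in_cut[of v1 u "f u - 1"] off_edge_in_cut[of v2 u "f u - 1"] by auto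
  then have "{v1, u} = {v2, u}" by (rule cut_off_edges_unique)
  then show ?thesis using off_edge_ends[OF assms(1)] by (auto simp: doubleton_eq_iff)
qed

abbreviation incr_off_walk :: "(nat \<Rightarrow> 'a) \<Rightarrow> nat \<Rightarrow> bool" where
  "incr_off_walk q s \<equiv> \<forall>i<s. {q i, q (Suc i)} \<in> off_edges \<and> f (q i) < f (q (Suc i))"

definition hangs_left :: "'a \<Rightarrow> nat \<Rightarrow> (nat \<Rightarrow> 'a) \<Rightarrow> nat \<Rightarrow> bool" where
  "hangs_left x k q s \<longleftrightarrow> k \<le> r \<and> 0 < s \<and> q 0 = x \<and> q s = p k \<and> incr_off_walk q s \<and>
     (\<forall>i<s. q i \<notin> spine)"

definition hangs_right :: "'a \<Rightarrow> nat \<Rightarrow> (nat \<Rightarrow> 'a) \<Rightarrow> nat \<Rightarrow> bool" where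
  "hangs_right x k q s \<longleftrightarrow> k \<le> r \<and> 0 < s \<and> q 0 = p k \<and> q s = x \<and> incr_off_walk q s \<and>
     (\<forall>i. 0 < i \<and> i \<le> s \<longrightarrow> q i \<notin> spine)"

definition hangs :: "'a \<Rightarrow> nat \<Rightarrow> bool" where
  "hangs x k \<longleftrightarrow> (\<exists>q s. hangs_left x k q s \<or> hangs_right x k q s)"

lemma incr_off_walk_less: "incr_off_walk q s \<Longrightarrow> i < j \<Longrightarrow> j \<le> s \<Longrightarrow> f (q i) < f (q j)"
  using chain_less[of s "f \<circ> q" i j] by simp

lemma hangs_left_first_edge: "hangs_left x k q s \<Longrightarrow> {x, q 1} \<in> off_edges \<and> f x < f (q 1)"
  unfolding hangs_left_def by (metis One_nat_def)

lemma hangs_right_last_edge: "hangs_right x k q s \<Longrightarrow> {x, q (s - 1)} \<in> off_edges \<and> f (q (s - 1)) < f x"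
  unfolding hangs_right_def by (cases s) (auto simp: insert_commute)

lemma hangs_left_spine_neighbour:
  "k \<le> r \<Longrightarrow> {z, p k} \<in> off_edges \<Longrightarrow> f z < f (p k) \<Longrightarrow> z \<notin> spine \<Longrightarrow>
    hangs_left z k (\<lambda>i. if i = 0 then z else p k) 1"
  unfolding hangs_left_def by auto

lemma hangs_right_spine_neighbour:
  "k \<le> r \<Longrightarrow> {p k, z} \<in> off_edges \<Longrightarrow> f (p k) < f z \<Longrightarrow> z \<notin> spine \<Longrightarrow>
    hangs_right z k (\<lambda>i. if i = 0 then p k else z) 1"
  unfolding hangs_right_def by auto

lemma hangs_left_cons:
  assumes "hangs_left y k q s" "{z, y} \<in> off_edges" "f z < f y" "z \<notin> spine"
  shows "hangs_left z k (\<lambda>i. if i = 0 then z else q (i - 1)) (Suc s)"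
  using assms unfolding hangs_left_def by (auto simp: less_Suc_eq_0_disj)

lemma hangs_left_tail:
  "hangs_left y k q s \<Longrightarrow> s \<noteq> 1 \<Longrightarrow> hangs_left (q 1) k (\<lambda>i. q (Suc i)) (s - 1)"
  unfolding hangs_left_def by auto

lemma hangs_right_snoc:
  assumes "hangs_right y k q s" "{y, z} \<in> off_edges" "f y < f z" "z \<notin> spine"
  shows "hangs_right z k (q(Suc s := z)) (Suc s)"
  using assms unfolding hangs_right_def by (auto simp: less_Suc_eq le_Suc_eq)

lemma hangs_right_butlast:
  "hangs_right y k q s \<Longrightarrow> s \<noteq> 1 \<Longrightarrow> hangs_right (q (s - 1)) k q (s - 1)"
  unfolding hangs_right_def by auto

lemma hangs_left_in_V: "hangs_left x k q s \<Longrightarrow> i \<le> s \<Longrightarrow> q i \<in> V"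
  unfolding hangs_left_def off_edges_def using walk_in_vertices[OF graph, of s q i] by auto

lemma hangs_right_in_V: "hangs_right x k q s \<Longrightarrow> i \<le> s \<Longrightarrow> q i \<in> V"
  unfolding hangs_right_def off_edges_def using walk_in_vertices[OF graph, of s q i] by auto

lemma spine_neighbour_hangs:
  assumes k: "k \<le> r" and e: "{p k, z} \<in> off_edges" and z: "z \<notin> spine"
  shows "\<exists>k. hangs z k"
proof -
  have "f (p k) \<noteq> f z" using off_edge_ends[OF e] f_inj by blast
  then consider "f z < f (p k)" | "f (p k) < f z" by linarith
  then show ?thesis
  proof cases
    case 1
    have "{z, p k} \<in> off_edges" using e by (simp add: insert_commute)
    then show ?thesis using hangs_left_spine_neighbour[OF k _ 1 z] unfolding hangs_def by blast
  next
    case 2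
    then show ?thesis using hangs_right_spine_neighbour[OF k e _ z] unfolding hangs_def by blast
  qed
qed

lemma hanger_neighbour_hangs:
  assumes y: "hangs y k" and e: "{y, z} \<in> off_edges" and z: "z \<notin> spine"
  shows "\<exists>k. hangs z k"
proof -
  have e': "{z, y} \<in> off_edges" using e by (simp add: insert_commute)
  have "f y \<noteq> f z" using off_edge_ends[OF e] f_inj by blast
  obtain q s where "hangs_left y k q s \<or> hangs_right y k q s" using y unfolding hangs_def by blast
  then show ?thesis
  proof
    assume hl: "hangs_left y k q s"
    show ?thesis
    proof (cases "f z < f y")
      case True
      then show ?thesis using hangs_left_cons[OF hl e' _ z] unfolding hangs_def by blast
    next
      case False
      then have "z = q 1"
        using \<open>f y \<noteq> f z\<close> hangs_left_first_edge[OF hl] unique_right_off_neighbour[OF e] by simp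
      moreover have "s \<noteq> 1" using hl z calculation unfolding hangs_left_def by (auto intro: spine_vertex)
      ultimately show ?thesis using hangs_left_tail[OF hl] unfolding hangs_def by blast
    qed
  next
    assume hr: "hangs_right y k q s"
    show ?thesis
    proof (cases "f y < f z")
      case True
      then show ?thesis using hangs_right_snoc[OF hr e _ z] unfolding hangs_def by blast
    next
      case False
      then have "z = q (s - 1)"
        using \<open>f y \<noteq> f z\<close> hangs_right_last_edge[OF hr] unique_left_off_neighbour[OF e] by simp
      moreover have "s \<noteq> 1" using hr z calculation unfolding hangs_right_def by (auto intro: spine_vertex)
      ultimately show ?thesis using hangs_right_butlast[OF hr] unfolding hangs_def by blast
    qed
  qed
qed

lemma hangs_neighbour:
  assumes yz: "{y, z} \<in> E" and y: "y \<in> spine \<or> (\<exists>k. hangs y k)" and z: "z \<notin> spine"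
  shows "\<exists>k. hangs z k"
proof -
  have e: "{y, z} \<in> off_edges" using off_edge_if_off_spine[of z y] yz z by (simp add: insert_commute)
  from y show ?thesis
  proof
    assume "y \<in> spine"
    then obtain k where "k \<le> r" "y = p k" using in_spine_iff by blast
    then show ?thesis using spine_neighbour_hangs e z by blast
  next
    assume "\<exists>k. hangs y k"
    then show ?thesis using hanger_neighbour_hangs e z by blast
  qed
qed

lemma off_spine_hangs:
  assumes "x \<in> V" "x \<notin> spine"
  shows "\<exists>k. hangs x k"
proof -
  have "(p 0, x) \<in> (adj_rel E)\<^sup>*" using conn spine_in_V assms(1) unfolding connected_graph_def by blast
  then have "x \<in> spine \<or> (\<exists>k. hangs x k)"
  proof (induction rule: rtrancl_induct)
    case base
    then show ?case using spine_vertex by simp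
  next
    case (step y z)
    then show ?case using hangs_neighbour unfolding adj_rel_def by blast
  qed
  then show ?thesis using assms(2) by blast
qed

lemma hangs_left_unique:
  assumes "hangs_left x k q s" "hangs_left x k' q' s'"
  shows "k = k'"
proof -
  have False if hl: "hangs_left x k q s" and hl': "hangs_left x k' q' s'" and kk: "k < k'"
    for k q s k' q' s'
  proof -
    have q: "k \<le> r" "q 0 = x" "q s = p k" "0 < s" "incr_off_walk q s"
      using hl unfolding hangs_left_def by auto
    have q': "k' \<le> r" "q' 0 = x" "q' s' = p k'" "incr_off_walk q' s'" "\<forall>i<s'. q' i \<notin> spine"
      using hl' unfolding hangs_left_def by auto
    obtain t where t: "s = Suc t" using q(4) by (cases s) auto
    define i where "i = f (p k) - 1"
    have "{q t, p k} \<in> cut_edges f off_edges i"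
      using off_edge_in_cut[of "q t" "p k" i] q(3,5) t unfolding i_def by auto
    moreover have "(f \<circ> q') 0 \<le> i" "i < (f \<circ> q') s'"
      using incr_off_walk_less[OF q(5), of 0 s] spine_less[OF kk q'(1)] q q' unfolding i_def by auto
    then obtain j where j: "j < s'" "f (q' j) \<le> i" "i < f (q' (Suc j))"
      by (rule crossing_step) auto
    then have "{q' j, q' (Suc j)} \<in> cut_edges f off_edges i"
      using off_edge_in_cut q'(4) by blast
    ultimately have "{q t, p k} = {q' j, q' (Suc j)}" by (rule cut_off_edges_unique)
    then have "p k = q' (Suc j)" using q'(5) j spine_vertex[OF q(1)] by (auto simp: doubleton_eq_iff)
    then have "Suc j = s'" using q'(5) spine_vertex[OF q(1)] j(1) by (metis Suc_lessI)
    then show False using \<open>p k = q' (Suc j)\<close> q'(1,3) q(1) kk spine_inj by fastforce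
  qed
  with assms show ?thesis by (metis linorder_neqE_nat)
qed

lemma hangs_right_unique:
  assumes "hangs_right x k q s" "hangs_right x k' q' s'"
  shows "k = k'"
proof -
  have False if hr: "hangs_right x k q s" and hr': "hangs_right x k' q' s'" and kk: "k < k'"
    for k q s k' q' s'
  proof -
    have q: "k \<le> r" "q 0 = p k" "q s = x" "incr_off_walk q s" "\<forall>i. 0 < i \<and> i \<le> s \<longrightarrow> q i \<notin> spine"
      using hr unfolding hangs_right_def by auto
    have q': "k' \<le> r" "q' 0 = p k'" "q' s' = x" "0 < s'" "incr_off_walk q' s'"
      using hr' unfolding hangs_right_def by auto
    define i where "i = f (p k')"
    have "{q' 0, q' 1} \<in> cut_edges f off_edges i"
      using off_edge_in_cut[of "q' 0" "q' 1" i] q' unfolding i_def by (metis One_nat_def order_refl)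
    moreover have "(f \<circ> q) 0 \<le> i" "i < (f \<circ> q) s"
      using spine_less[OF kk q'(1)] incr_off_walk_less[OF q'(5), of 0 s'] q q' unfolding i_def by auto
    then obtain j where j: "j < s" "f (q j) \<le> i" "i < f (q (Suc j))"
      by (rule crossing_step) auto
    then have "{q j, q (Suc j)} \<in> cut_edges f off_edges i"
      using off_edge_in_cut q(4) by blast
    ultimately have "{q' 0, q' 1} = {q j, q (Suc j)}" by (rule cut_off_edges_unique)
    moreover have "q (Suc j) \<notin> spine" using q(5) j(1) by simp
    ultimately have "p k' = q j" using q'(2) spine_vertex[OF q'(1)] by (auto simp: doubleton_eq_iff)
    moreover have "q j \<notin> spine" if "j \<noteq> 0" using q(5) j(1) that by simp
    ultimately have "j = 0" using spine_vertex[OF q'(1)] by auto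
    then have "p k' = p k" using \<open>p k' = q j\<close> q(2) by simp
    then show False using spine_inj[OF q'(1) q(1)] kk by simp
  qed
  with assms show ?thesis by (metis linorder_neqE_nat)
qed

lemma no_spine_bypass:
  assumes jk: "j < k" "k \<le> r" and c: "c 0 = p j" "c t = p k" "0 < t"
    and walk: "\<forall>i<t. {c i, c (Suc i)} \<in> E \<and> f (c i) < f (c (Suc i))"
    and interior: "\<forall>i. 0 < i \<and> i < t \<longrightarrow> c i \<notin> spine"
    and len: "2 \<le> t \<or> Suc j < k"
  shows False
proof -
  define d where "d = k - j"
  have "has_cycle V E"
  proof (rule cycle_of_two_paths[where a = "\<lambda>i. p (j + i)" and d = d and c = c and t = t])
    show "\<forall>i<d. {p (j + i), p (j + Suc i)} \<in> E" using spine_edge jk unfolding d_def by auto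
    show "inj_on (\<lambda>i. p (j + i)) {..d}"
    proof (rule inj_onI)
      fix x y assume "x \<in> {..d}" "y \<in> {..d}" "p (j + x) = p (j + y)"
      then have "j + x = j + y" using spine_inj[of "j + x" "j + y"] jk unfolding d_def by simp
      then show "x = y" by simp
    qed
    show "(\<lambda>i. p (j + i)) ` {..d} \<subseteq> V" using spine_in_V jk unfolding d_def by auto
    show "\<forall>i<t. {c i, c (Suc i)} \<in> E" using walk by blast
    have "\<forall>i<t. (f \<circ> c) i < (f \<circ> c) (Suc i)" using walk by simp
    then show "inj_on c {..t}"
      using chain_less[of t "f \<circ> c"] by (intro inj_onI) (metis atMost_iff less_irrefl comp_apply linorder_neqE_nat)
    show "c ` {..t} \<subseteq> V" using walk_in_vertices[OF graph, of t c] walk c(3) by auto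
    show "\<forall>i. 0 < i \<and> i < t \<longrightarrow> c i \<notin> (\<lambda>i. p (j + i)) ` {..d}"
      using interior jk spine_vertex unfolding d_def by fastforce
  qed (use c jk len in \<open>auto simp: d_def\<close>)
  then show False using acyclic by simp
qed

lemma not_hangs_left_and_right: "hangs_left x k q s \<Longrightarrow> hangs_right x k' q' s' \<Longrightarrow> False"
proof -
  assume hl: "hangs_left x k q s" and hr: "hangs_right x k' q' s'"
  have q: "k \<le> r" "q 0 = x" "q s = p k" "0 < s" "incr_off_walk q s" "\<forall>i<s. q i \<notin> spine"
    using hl unfolding hangs_left_def by auto
  have q': "k' \<le> r" "q' 0 = p k'" "q' s' = x" "0 < s'" "incr_off_walk q' s'"
    "\<forall>i. 0 < i \<and> i \<le> s' \<longrightarrow> q' i \<notin> spine"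
    using hr unfolding hangs_right_def by auto
  define c where "c i = (if i \<le> s' then q' i else q (i - s'))" for i
  have walk: "incr_off_walk c (s' + s)"
  proof (intro allI impI)
    fix i assume i: "i < s' + s"
    show "{c i, c (Suc i)} \<in> off_edges \<and> f (c i) < f (c (Suc i))"
    proof (cases "i < s'")
      case True
      then show ?thesis using q' unfolding c_def by auto
    next
      case False
      then have "c i = q (i - s')" "c (Suc i) = q (Suc (i - s'))"
        using q q' unfolding c_def by (auto simp: Suc_diff_le)
      moreover have "i - s' < s" using i False by simp
      ultimately show ?thesis using q(5) by simp
    qed
  qed
  have ends: "c 0 = p k'" "c (s' + s) = p k" using q q' unfolding c_def by auto
  have "f (p k') < f (p k)" using incr_off_walk_less[OF walk, of 0 "s' + s"] ends q q' by simp
  then have "k' < k" using spine_less_iff q(1) q'(1) by simp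
  moreover have "\<forall>i. 0 < i \<and> i < s' + s \<longrightarrow> c i \<notin> spine"
    using q(6) q'(6) unfolding c_def by auto
  moreover have "\<forall>i<s' + s. {c i, c (Suc i)} \<in> E \<and> f (c i) < f (c (Suc i))"
    using walk unfolding off_edges_def by simp
  ultimately show False using no_spine_bypass[of k' k c "s' + s"] ends q(1,4) q'(4) by simp
qed

lemma no_off_edge_on_spine:
  assumes "{p j, p k} \<in> off_edges" "j \<le> r" "k \<le> r"
  shows False
proof -
  have False if e: "{p j, p k} \<in> off_edges" and jk: "j < k" "k \<le> r" for j k
  proof -
    have "Suc j \<noteq> k"
    proof
      assume "Suc j = k"
      then have "{p j, p k} \<in> spine_edges" using jk unfolding spine_edges_def by auto
      then show False using e unfolding off_edges_def by simp
    qed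
    then have "Suc j < k" using jk by simp
    moreover have "\<forall>i<1. {(\<lambda>i. if i = 0 then p j else p k) i, (\<lambda>i. if i = 0 then p j else p k) (Suc i)} \<in> E
        \<and> f ((\<lambda>i. if i = 0 then p j else p k) i) < f ((\<lambda>i. if i = 0 then p j else p k) (Suc i))"
      using e jk spine_less unfolding off_edges_def by auto
    ultimately show False using no_spine_bypass[OF jk, of "\<lambda>i. if i = 0 then p j else p k" 1] by simp
  qed
  moreover have "j \<noteq> k" using off_edge_ends[OF assms(1)] by auto
  ultimately show False using assms by (metis insert_commute linorder_neqE_nat)
qed

lemma hangs_unique: "hangs x k \<Longrightarrow> hangs x k' \<Longrightarrow> k = k'"
  unfolding hangs_def using hangs_left_unique hangs_right_unique not_hangs_left_and_right by metis

text \<open>For off-spine vertices the \<open>THE\<close> is well defined by \<open>off_spine_hangs\<close> and \<open>hangs_unique\<close>.\<close>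

definition anchor :: "'a \<Rightarrow> nat" where "anchor x = (THE k. hangs x k)"

definition left_of_anchor :: "'a \<Rightarrow> bool" where "left_of_anchor x \<longleftrightarrow> f x < f (p (anchor x))"

text \<open>The neighbour of \<open>x\<close> one step closer to its anchor.\<close>

definition inward :: "'a \<Rightarrow> 'a" where
  "inward x = (THE y. {x, y} \<in> off_edges \<and> (f x < f y \<longleftrightarrow> left_of_anchor x))"

lemma anchor_eqI: "hangs x k \<Longrightarrow> anchor x = k"
  unfolding anchor_def using hangs_unique by blast

lemma hangs_anchor: "x \<in> V \<Longrightarrow> x \<notin> spine \<Longrightarrow> hangs x (anchor x)"
  using off_spine_hangs anchor_eqI by blast

lemma anchor_le: "x \<in> V \<Longrightarrow> x \<notin> spine \<Longrightarrow> anchor x \<le> r"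
  using hangs_anchor unfolding hangs_def hangs_left_def hangs_right_def by blast

lemma hangs_left_anchor: "hangs_left x k q s \<Longrightarrow> left_of_anchor x \<and> anchor x = k"
proof -
  assume hl: "hangs_left x k q s"
  then have "anchor x = k" using anchor_eqI unfolding hangs_def by blast
  moreover have "f (q 0) < f (q s)" using hl incr_off_walk_less[where q = q and s = s and i = 0 and j = s] unfolding hangs_left_def by auto
  ultimately show ?thesis using hl unfolding left_of_anchor_def hangs_left_def by auto
qed

lemma hangs_right_anchor: "hangs_right x k q s \<Longrightarrow> \<not> left_of_anchor x \<and> anchor x = k"
proof -
  assume hr: "hangs_right x k q s"
  then have "anchor x = k" using anchor_eqI unfolding hangs_def by blast
  moreover have "f (q 0) < f (q s)" using hr incr_off_walk_less[where q = q and s = s and i = 0 and j = s] unfolding hangs_right_def by auto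
  ultimately show ?thesis using hr unfolding left_of_anchor_def hangs_right_def by auto
qed

lemma inward_hangs_left: "hangs_left x k q s \<Longrightarrow> inward x = q 1"
  unfolding inward_def
proof (rule the_equality)
  assume hl: "hangs_left x k q s"
  then show "{x, q 1} \<in> off_edges \<and> (f x < f (q 1) \<longleftrightarrow> left_of_anchor x)"
    using hangs_left_first_edge hangs_left_anchor by blast
  fix y assume "{x, y} \<in> off_edges \<and> (f x < f y \<longleftrightarrow> left_of_anchor x)"
  then show "y = q 1"
    using unique_right_off_neighbour hangs_left_first_edge[OF hl] hangs_left_anchor[OF hl] by blast
qed

lemma inward_hangs_right: "hangs_right x k q s \<Longrightarrow> inward x = q (s - 1)"
  unfolding inward_def
proof (rule the_equality)
  assume hr: "hangs_right x k q s"
  then show "{x, q (s - 1)} \<in> off_edges \<and> (f x < f (q (s - 1)) \<longleftrightarrow> left_of_anchor x)"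
    using hangs_right_last_edge hangs_right_anchor by fastforce
  fix y assume y: "{x, y} \<in> off_edges \<and> (f x < f y \<longleftrightarrow> left_of_anchor x)"
  then have "f x \<noteq> f y" using off_edge_ends f_inj by blast
  then have "f y < f x" using y hangs_right_anchor[OF hr] by auto
  then show "y = q (s - 1)"
    using unique_left_off_neighbour y hangs_right_last_edge[OF hr] by blast
qed

lemma inward_off_edge:
  assumes "x \<in> V" "x \<notin> spine"
  shows "{x, inward x} \<in> off_edges \<and> (f x < f (inward x) \<longleftrightarrow> left_of_anchor x)"
proof -
  obtain q s where "hangs_left x (anchor x) q s \<or> hangs_right x (anchor x) q s"
    using hangs_anchor[OF assms] unfolding hangs_def by blast
  then show ?thesis
  proof
    assume hl: "hangs_left x (anchor x) q s"
    then show ?thesis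
      using inward_hangs_left[OF hl] hangs_left_first_edge[OF hl] hangs_left_anchor[OF hl] by simp
  next
    assume hr: "hangs_right x (anchor x) q s"
    then show ?thesis
      using inward_hangs_right[OF hr] hangs_right_last_edge[OF hr] hangs_right_anchor[OF hr] by auto
  qed
qed

lemma inward_cases:
  assumes "x \<in> V" "x \<notin> spine"
  shows "inward x = p (anchor x) \<or> (inward x \<in> V \<and> inward x \<notin> spine \<and>
    anchor (inward x) = anchor x \<and> left_of_anchor (inward x) = left_of_anchor x)"
proof -
  obtain q s where "hangs_left x (anchor x) q s \<or> hangs_right x (anchor x) q s"
    using hangs_anchor[OF assms] unfolding hangs_def by blast
  then show ?thesis
  proof
    assume hl: "hangs_left x (anchor x) q s"
    show ?thesis
    proof (cases "s = 1")
      case True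
      then show ?thesis using inward_hangs_left[OF hl] hl unfolding hangs_left_def by simp
    next
      case False
      then have "q 1 \<notin> spine" using hl unfolding hangs_left_def by auto
      then show ?thesis
        using inward_hangs_left[OF hl] hangs_left_anchor[OF hl] hangs_left_in_V[OF hl, of 1]
          hangs_left_anchor[OF hangs_left_tail[OF hl False]] hl
        unfolding hangs_left_def by auto
    qed
  next
    assume hr: "hangs_right x (anchor x) q s"
    show ?thesis
    proof (cases "s = 1")
      case True
      then show ?thesis using inward_hangs_right[OF hr] hr unfolding hangs_right_def by simp
    next
      case False
      then have "q (s - 1) \<notin> spine" using hr unfolding hangs_right_def by auto
      then show ?thesis
        using inward_hangs_right[OF hr] hangs_right_anchor[OF hr] hangs_right_in_V[OF hr, of "s - 1"]
          hangs_right_anchor[OF hangs_right_butlast[OF hr False]]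
        by auto
    qed
  qed
qed

lemma no_left_hanger_inside_inward_edge:
  assumes x: "x \<in> V" "x \<notin> spine" and y: "y \<in> V" "y \<notin> spine" "left_of_anchor y"
    and between: "f x < f y" "f y < f (inward x)"
  shows False
proof -
  have "{x, inward x} \<in> cut_edges f off_edges (f y)"
    using inward_off_edge[OF x] off_edge_in_cut between by simp
  moreover have "{y, inward y} \<in> cut_edges f off_edges (f y)"
    using inward_off_edge[OF y(1,2)] y(3) off_edge_in_cut by simp
  ultimately have "{x, inward x} = {y, inward y}" by (rule cut_off_edges_unique)
  then show False using between by (auto simp: doubleton_eq_iff)
qed

lemma no_right_hanger_inside_inward_edge:
  assumes x: "x \<in> V" "x \<notin> spine" and y: "y \<in> V" "y \<notin> spine" "\<not> left_of_anchor y"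
    and between: "f (inward x) < f y" "f y < f x"
  shows False
proof -
  have iy: "{y, inward y} \<in> off_edges" "\<not> f y < f (inward y)"
    using inward_off_edge[OF y(1,2)] y(3) by auto
  then have "f y \<noteq> f (inward y)" using off_edge_ends f_inj by blast
  with iy have "f (inward y) < f y" by simp
  then have "{inward y, y} \<in> cut_edges f off_edges (f y - 1)"
    using iy(1) off_edge_in_cut[of "inward y" y] by (simp add: insert_commute)
  moreover have "{inward x, x} \<in> cut_edges f off_edges (f y - 1)"
    using inward_off_edge[OF x] off_edge_in_cut[of "inward x" x] between by (simp add: insert_commute)
  ultimately have "{inward y, y} = {inward x, x}" by (rule cut_off_edges_unique)
  then show False using between by (auto simp: doubleton_eq_iff)
qed

lemma off_edge_inward_hangs_left:
  assumes hl: "hangs_left u k q s" and uv: "{u, v} \<in> off_edges"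
  shows "v = inward u \<or> (v \<notin> spine \<and> u = inward v)"
proof -
  have vu: "{v, u} \<in> off_edges" using uv by (simp add: insert_commute)
  have u: "u \<notin> spine" using hl unfolding hangs_left_def by auto
  have "f u \<noteq> f v" using off_edge_ends[OF uv] f_inj by auto
  then consider (right) "f u < f v" | (left) "f v < f u" by linarith
  then show ?thesis
  proof cases
    case right
    then have "v = q 1" using unique_right_off_neighbour[OF uv] hangs_left_first_edge[OF hl] by simp
    then show ?thesis using inward_hangs_left[OF hl] by simp
  next
    case left
    have "v \<notin> spine"
    proof
      assume "v \<in> spine"
      then obtain j where "j \<le> r" "v = p j" using in_spine_iff by blast
      then show False using hangs_right_spine_neighbour[of j u] vu left u not_hangs_left_and_right[OF hl] by blast
    qed
    then show ?thesis using inward_hangs_left[OF hangs_left_cons[OF hl vu left]] hl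
      unfolding hangs_left_def by simp
  qed
qed

lemma off_edge_inward_hangs_right:
  assumes hr: "hangs_right u k q s" and uv: "{u, v} \<in> off_edges"
  shows "v = inward u \<or> (v \<notin> spine \<and> u = inward v)"
proof -
  have u: "u \<notin> spine" using hr unfolding hangs_right_def by auto
  have "f u \<noteq> f v" using off_edge_ends[OF uv] f_inj by auto
  then consider (left) "f v < f u" | (right) "f u < f v" by linarith
  then show ?thesis
  proof cases
    case left
    then have "v = q (s - 1)" using unique_left_off_neighbour[OF uv] hangs_right_last_edge[OF hr] by simp
    then show ?thesis using inward_hangs_right[OF hr] by simp
  next
    case right
    have "v \<notin> spine"
    proof
      assume "v \<in> spine"
      then obtain j where "j \<le> r" "v = p j" using in_spine_iff by blast
      then show False using hangs_left_spine_neighbour[of j u] uv right u not_hangs_left_and_right[OF _ hr] by blast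
    qed
    then show ?thesis using inward_hangs_right[OF hangs_right_snoc[OF hr uv right]] hr
      unfolding hangs_right_def by simp
  qed
qed

lemma off_edge_inward:
  assumes uv: "{u, v} \<in> off_edges"
  shows "(u \<notin> spine \<and> v = inward u) \<or> (v \<notin> spine \<and> u = inward v)"
proof -
  have inward_if_off: "b = inward a \<or> (b \<notin> spine \<and> a = inward b)"
    if ab: "{a, b} \<in> off_edges" and a: "a \<notin> spine" for a b
  proof -
    have "a \<in> V" using off_edge_ends[OF ab] by simp
    then obtain q s where "hangs_left a (anchor a) q s \<or> hangs_right a (anchor a) q s"
      using hangs_anchor a unfolding hangs_def by blast
    then show ?thesis using off_edge_inward_hangs_left off_edge_inward_hangs_right ab by blast
  qed
  show ?thesis
  proof (cases "u \<in> spine")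
    case False
    then show ?thesis using inward_if_off[OF uv] by blast
  next
    case True
    show ?thesis
    proof (cases "v \<in> spine")
      case False
      then show ?thesis using inward_if_off[of v u] uv by (auto simp: insert_commute)
    next
      case True
      then show ?thesis using \<open>u \<in> spine\<close> no_off_edge_on_spine uv in_spine_iff by metis
    qed
  qed
qed

section \<open>Embedding the tree into a subdivision of \<open>G_n\<close>\<close>

text \<open>The tree is embedded into a subdivision of \<open>G_n\<close> for \<open>n = r + 3\<close>: \<open>p k\<close> becomes the path
  vertex \<open>3 (k + 2)\<close>, and an off-spine vertex \<open>x\<close> becomes the new vertex \<open>offset + f x\<close>.
  The off-spine vertices hanging from \<open>p k\<close> on one side, taken in order of their distance from
  \<open>p k\<close>, form a path starting at \<open>p k\<close>, each joined to the previous one by its inward edge;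
  inserting them in this order, each one subdivides the edge between the outermost vertex so
  far and the pendant of \<open>p k\<close> on that side.\<close>

definition G_size :: nat where "G_size = r + 3"

definition offset :: nat where "offset = 3 * G_size + 3"

definition off_spine :: "'a set" where "off_spine = V - spine"

definition embedding :: "'a \<Rightarrow> nat" where
  "embedding x = (if x \<in> spine then 3 * (the_inv_into {..r} p x + 2) else offset + f x)"

definition pendant :: "nat \<Rightarrow> bool \<Rightarrow> nat" where
  "pendant k s = 3 * (k + 2) + (if s then 1 else 2)"

definition anchor_dist :: "nat \<Rightarrow> 'a \<Rightarrow> nat" where
  "anchor_dist k x = (if f x < f (p k) then f (p k) - f x else f x - f (p k))"

definition hanging :: "'a set \<Rightarrow> nat \<Rightarrow> bool \<Rightarrow> 'a set" where
  "hanging S k s = {x \<in> S. anchor x = k \<and> left_of_anchor x = s} \<union> {p k}"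

definition outermost :: "'a set \<Rightarrow> nat \<Rightarrow> bool \<Rightarrow> 'a \<Rightarrow> bool" where
  "outermost S k s z \<longleftrightarrow> z \<in> hanging S k s \<and> (\<forall>y\<in>hanging S k s. anchor_dist k y \<le> anchor_dist k z)"

definition G_path_edges :: "nat set set" where
  "G_path_edges = {{3 * i, 3 * (i + 1)} | i. 1 \<le> i \<and> i < G_size}"

definition inward_edges :: "'a set \<Rightarrow> nat set set" where
  "inward_edges S = {{embedding x, embedding (inward x)} | x. x \<in> S}"

definition pendant_edges :: "'a set \<Rightarrow> nat set set" where
  "pendant_edges S = {{embedding z, pendant k s} | z k s. k \<le> r \<and> outermost S k s z}"

definition subdiv_V :: "'a set \<Rightarrow> nat set" where
  "subdiv_V S = GV G_size \<union> embedding ` S"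

definition subdiv_E :: "'a set \<Rightarrow> nat set set" where
  "subdiv_E S = G_path_edges \<union> inward_edges S \<union> pendant_edges S"

text \<open>Orders the off-spine vertices by distance from their anchor, breaking ties by position.\<close>

definition insertion_key :: "'a \<Rightarrow> nat" where
  "insertion_key x = anchor_dist (anchor x) x * (card V + 1) + f x"

definition inserted :: "nat \<Rightarrow> 'a set" where
  "inserted t = {x \<in> off_spine. insertion_key x < t}"

lemma embedding_spine: "k \<le> r \<Longrightarrow> embedding (p k) = 3 * (k + 2)"
proof -
  assume k: "k \<le> r"
  have "inj_on p {..r}" using spine_inj by (intro inj_onI) auto
  then have "the_inv_into {..r} p (p k) = k" using k by (simp add: the_inv_into_f_f)
  then show ?thesis using spine_vertex[OF k] unfolding embedding_def by simp
qed

lemma embedding_off_spine: "x \<notin> spine \<Longrightarrow> embedding x = offset + f x"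
  unfolding embedding_def by simp

lemma embedding_spine_less_offset: "x \<in> spine \<Longrightarrow> embedding x < offset"
  using embedding_spine unfolding in_spine_iff offset_def G_size_def by auto

lemma pendant_mod3: "pendant k s mod 3 \<noteq> 0"
  unfolding pendant_def by (cases s) presburger+

lemma pendant_ne_embedding: "k \<le> r \<Longrightarrow> embedding z \<noteq> pendant k s"
proof
  assume k: "k \<le> r" and e: "embedding z = pendant k s"
  show False
  proof (cases "z \<in> spine")
    case True
    then obtain j where "j \<le> r" "z = p j" using in_spine_iff by blast
    then have "embedding z mod 3 = 0" using embedding_spine by simp
    then show False using e pendant_mod3 by simp
  next
    case False
    then have "offset \<le> embedding z" using embedding_off_spine by simp
    moreover have "pendant k s < offset" using k unfolding pendant_def offset_def G_size_def by auto
    ultimately show False using e by simp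
  qed
qed

lemma pendant_inj: "pendant k s = pendant k' s' \<Longrightarrow> k = k' \<and> s = s'"
  unfolding pendant_def by (cases s; cases s'; presburger)

lemma pendant_notin_G_path_edge: "e \<in> G_path_edges \<Longrightarrow> pendant k s \<notin> e"
proof
  assume "e \<in> G_path_edges" "pendant k s \<in> e"
  then obtain i where "pendant k s = 3 * i \<or> pendant k s = 3 * (i + 1)" unfolding G_path_edges_def by blast
  then show False using pendant_mod3[of k s] by auto
qed

lemma anchor_dist_pos:
  assumes "k \<le> r" "x \<in> V" "x \<noteq> p k"
  shows "0 < anchor_dist k x"
proof -
  have "f x \<noteq> f (p k)" using f_inj[of x "p k"] spine_in_V assms by auto
  then show ?thesis unfolding anchor_dist_def by auto
qed

lemma anchor_dist_le: "k \<le> r \<Longrightarrow> x \<in> V \<Longrightarrow> anchor_dist k x \<le> card V"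
  using f_range[of x] f_range[of "p k"] spine_in_V unfolding anchor_dist_def by auto

lemma anchor_dist_left: "f y \<le> f (p k) \<Longrightarrow> anchor_dist k y = f (p k) - f y"
  unfolding anchor_dist_def by auto

lemma anchor_dist_right: "f (p k) \<le> f y \<Longrightarrow> anchor_dist k y = f y - f (p k)"
  unfolding anchor_dist_def by auto

lemma anchor_dist_inj_on_hanging:
  assumes S: "S \<subseteq> off_spine" and k: "k \<le> r" and y: "y \<in> hanging S k s" and z: "z \<in> hanging S k s"
    and eq: "anchor_dist k y = anchor_dist k z"
  shows "y = z"
proof -
  have member: "w \<in> V \<and> anchor w = k \<and> left_of_anchor w = s" if "w \<in> hanging S k s" "w \<noteq> p k" for w
    using that S unfolding hanging_def off_spine_def by auto
  consider "y = p k" | "z = p k" | "y \<noteq> p k" "z \<noteq> p k" by blast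
  then show ?thesis
  proof cases
    case 1
    then show ?thesis
      using eq anchor_dist_pos[OF k, of z] member[OF z] unfolding anchor_dist_def by (cases "z = p k") auto
  next
    case 2
    then show ?thesis
      using eq anchor_dist_pos[OF k, of y] member[OF y] unfolding anchor_dist_def by (cases "y = p k") auto
  next
    case 3
    then have "y \<in> V" "z \<in> V" "anchor y = k" "anchor z = k" "left_of_anchor y = left_of_anchor z"
      using member[OF y] member[OF z] by auto
    moreover have "f y \<noteq> f (p k)" "f z \<noteq> f (p k)" using 3 f_inj spine_in_V k calculation by auto
    ultimately have "f y = f z" using eq unfolding anchor_dist_def left_of_anchor_def by (auto split: if_splits)
    then show ?thesis using f_inj \<open>y \<in> V\<close> \<open>z \<in> V\<close> by blast
  qed
qed

lemma outermost_unique: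
  "S \<subseteq> off_spine \<Longrightarrow> k \<le> r \<Longrightarrow> outermost S k s a \<Longrightarrow> outermost S k s b \<Longrightarrow> a = b"
  unfolding outermost_def using anchor_dist_inj_on_hanging by (meson le_antisym)

lemma insertion_key_less:
  assumes "x \<in> off_spine" "y \<in> off_spine" "anchor_dist (anchor y) y < anchor_dist (anchor x) x"
  shows "insertion_key y < insertion_key x"
proof -
  define M where "M = card V + 1"
  have "f y < M" using f_range[of y] assms(2) unfolding M_def off_spine_def by auto
  then have "insertion_key y < Suc (anchor_dist (anchor y) y) * M"
    unfolding insertion_key_def M_def by simp
  also have "\<dots> \<le> anchor_dist (anchor x) x * M" using assms(3) by (intro mult_le_mono1) simp
  also have "\<dots> \<le> insertion_key x" unfolding insertion_key_def M_def by simp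
  finally show ?thesis .
qed

lemma insertion_key_inj:
  assumes "x \<in> off_spine" "y \<in> off_spine" "insertion_key x = insertion_key y"
  shows "x = y"
proof -
  define M where "M = card V + 1"
  have "f x < M" "f y < M" using f_range[of x] f_range[of y] assms unfolding M_def off_spine_def by auto
  moreover have "insertion_key x = anchor_dist (anchor x) x * M + f x"
    "insertion_key y = anchor_dist (anchor y) y * M + f y"
    unfolding insertion_key_def M_def by simp_all
  ultimately have "insertion_key x mod M = f x" "insertion_key y mod M = f y" by simp_all
  then have "f x = f y" using assms(3) by simp
  then show ?thesis using f_inj assms(1,2) unfolding off_spine_def by blast
qed

lemma insertion_key_bound: "x \<in> off_spine \<Longrightarrow> insertion_key x < Suc (card V) * Suc (card V)"
proof -
  assume x: "x \<in> off_spine"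
  have "anchor_dist (anchor x) x \<le> card V" using anchor_dist_le anchor_le x unfolding off_spine_def by simp
  moreover have "f x \<le> card V" using f_range x unfolding off_spine_def by simp
  ultimately have "insertion_key x \<le> card V * Suc (card V) + card V"
    unfolding insertion_key_def by (metis add_le_mono mult_le_mono1 Suc_eq_plus1)
  also have "\<dots> < Suc (card V) * Suc (card V)" by simp
  finally show ?thesis .
qed

lemma inserted_subset: "inserted t \<subseteq> off_spine"
  unfolding inserted_def by auto

lemma inserted_Suc: "inserted (Suc t) = inserted t \<union> {x \<in> off_spine. insertion_key x = t}"
  unfolding inserted_def by auto

lemma inserted_all: "inserted (Suc (card V) * Suc (card V)) = off_spine"
  unfolding inserted_def using insertion_key_bound by auto

lemma inward_edgesI: "y \<in> S \<Longrightarrow> {embedding y, embedding (inward y)} \<in> inward_edges S"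
  unfolding inward_edges_def by blast

lemma inward_edgesE: "e \<in> inward_edges S \<Longrightarrow> (\<And>y. y \<in> S \<Longrightarrow> e = {embedding y, embedding (inward y)} \<Longrightarrow> P) \<Longrightarrow> P"
  unfolding inward_edges_def by blast

lemma pendant_edgesI: "k \<le> r \<Longrightarrow> outermost S k s z \<Longrightarrow> {embedding z, pendant k s} \<in> pendant_edges S"
  unfolding pendant_edges_def by blast

lemma pendant_edgesE:
  "e \<in> pendant_edges S \<Longrightarrow> (\<And>z k s. k \<le> r \<Longrightarrow> outermost S k s z \<Longrightarrow> e = {embedding z, pendant k s} \<Longrightarrow> P) \<Longrightarrow> P"
  unfolding pendant_edges_def by blast

lemma inward_side:
  assumes "x \<in> off_spine"
  shows "(left_of_anchor x \<longrightarrow> f x < f (inward x) \<and> f (inward x) \<le> f (p (anchor x))) \<and>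
    (\<not> left_of_anchor x \<longrightarrow> f (inward x) < f x \<and> f (p (anchor x)) \<le> f (inward x))"
proof -
  have x: "x \<in> V" "x \<notin> spine" using assms unfolding off_spine_def by auto
  have edge: "{x, inward x} \<in> off_edges" "f x < f (inward x) \<longleftrightarrow> left_of_anchor x"
    using inward_off_edge[OF x] by auto
  then have "f x \<noteq> f (inward x)" using off_edge_ends f_inj by blast
  moreover have "(left_of_anchor x \<longrightarrow> f (inward x) \<le> f (p (anchor x))) \<and>
      (\<not> left_of_anchor x \<longrightarrow> f (p (anchor x)) \<le> f (inward x))"
  proof (cases "inward x = p (anchor x)")
    case False
    then have "inward x \<in> V" "anchor (inward x) = anchor x"
      "left_of_anchor (inward x) = left_of_anchor x"
      using inward_cases[OF x] by auto
    moreover have "f (inward x) \<noteq> f (p (anchor x))"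
      using f_inj False calculation(1) spine_in_V anchor_le[OF x] by auto
    ultimately show ?thesis unfolding left_of_anchor_def by auto
  qed simp
  ultimately show ?thesis using edge by auto
qed

lemma inward_closer:
  assumes "x \<in> off_spine"
  shows "anchor_dist (anchor x) (inward x) < anchor_dist (anchor x) x"
  using inward_side[OF assms] unfolding anchor_dist_def left_of_anchor_def by auto

lemma inward_edges_insert:
  "inward_edges (insert y S) = insert {embedding y, embedding (inward y)} (inward_edges S)"
  unfolding inward_edges_def by blast

lemma pendant_notin_inward_edge:
  assumes "k \<le> r" "e \<in> inward_edges S"
  shows "pendant k s \<notin> e"
proof -
  obtain y where "e = {embedding y, embedding (inward y)}" using assms(2) by (rule inward_edgesE)
  then show ?thesis using pendant_ne_embedding[OF assms(1), of y s] pendant_ne_embedding[OF assms(1), of "inward y" s]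
    by auto
qed

context
  fixes x assumes x: "x \<in> off_spine"
begin

abbreviation earlier :: "'a set" where "earlier \<equiv> inserted (insertion_key x)"

lemma x_notin_earlier: "x \<notin> earlier"
  unfolding inserted_def by simp

lemma anchor_x_le: "anchor x \<le> r"
  using anchor_le x unfolding off_spine_def by simp

lemma inward_hanging: "inward x \<in> hanging earlier (anchor x) (left_of_anchor x)"
proof (cases "inward x = p (anchor x)")
  case False
  then have i: "inward x \<in> off_spine" "anchor (inward x) = anchor x"
    "left_of_anchor (inward x) = left_of_anchor x"
    using inward_cases x unfolding off_spine_def by auto
  then have "insertion_key (inward x) < insertion_key x"
    using insertion_key_less[OF x i(1)] inward_closer[OF x] by simp
  then show ?thesis using i unfolding hanging_def inserted_def by simp
qed (simp add: hanging_def)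

lemma hanging_earlier_closer:
  assumes y: "y \<in> hanging earlier (anchor x) (left_of_anchor x)"
  shows "anchor_dist (anchor x) y < anchor_dist (anchor x) x"
proof (cases "y = p (anchor x)")
  case True
  then show ?thesis using inward_closer[OF x] unfolding anchor_dist_def by auto
next
  case False
  then have yS: "y \<in> earlier" "anchor y = anchor x" "left_of_anchor y = left_of_anchor x"
    using y unfolding hanging_def by auto
  then have "y \<in> off_spine" "insertion_key y < insertion_key x" unfolding inserted_def by auto
  then have "anchor_dist (anchor x) y \<le> anchor_dist (anchor x) x"
    using insertion_key_less[OF \<open>y \<in> off_spine\<close> x] yS(2) by (metis not_le less_asym)
  moreover have "anchor_dist (anchor x) y \<noteq> anchor_dist (anchor x) x"
  proof
    assume "anchor_dist (anchor x) y = anchor_dist (anchor x) x"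
    moreover have "x \<in> hanging (insert x earlier) (anchor x) (left_of_anchor x)"
      "y \<in> hanging (insert x earlier) (anchor x) (left_of_anchor x)"
      using yS unfolding hanging_def by auto
    ultimately have "y = x"
      using anchor_dist_inj_on_hanging[of "insert x earlier"] inserted_subset x anchor_x_le by blast
    then show False using yS(1) x_notin_earlier by simp
  qed
  ultimately show ?thesis by simp
qed

lemma outermost_inward: "outermost earlier (anchor x) (left_of_anchor x) (inward x)"
  unfolding outermost_def
proof (intro conjI ballI)
  show "inward x \<in> hanging earlier (anchor x) (left_of_anchor x)" by (rule inward_hanging)
  fix y assume y: "y \<in> hanging earlier (anchor x) (left_of_anchor x)"
  show "anchor_dist (anchor x) y \<le> anchor_dist (anchor x) (inward x)"
  proof (rule ccontr)
    assume far: "\<not> anchor_dist (anchor x) y \<le> anchor_dist (anchor x) (inward x)"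
    have closer: "anchor_dist (anchor x) y < anchor_dist (anchor x) x" using hanging_earlier_closer[OF y] .
    have "y \<noteq> p (anchor x)" using far unfolding anchor_dist_def by auto
    then have yS: "y \<in> earlier" "anchor y = anchor x" "left_of_anchor y = left_of_anchor x"
      using y unfolding hanging_def by auto
    then have yV: "y \<in> V" "y \<notin> spine" using inserted_subset unfolding off_spine_def by auto
    have xV: "x \<in> V" "x \<notin> spine" using x unfolding off_spine_def by auto
    show False
    proof (cases "left_of_anchor x")
      case True
      then have "f y < f (p (anchor x))" using yS unfolding left_of_anchor_def by simp
      moreover have "f x < f (inward x)" "f (inward x) \<le> f (p (anchor x))" using inward_side[OF x] True by auto
      ultimately have "f x < f y" "f y < f (inward x)"
        using far closer anchor_dist_left[of _ "anchor x"] by auto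
      then show False using no_left_hanger_inside_inward_edge[OF xV yV] yS True by simp
    next
      case False
      then have "f (p (anchor x)) \<le> f y" using yS unfolding left_of_anchor_def by simp
      moreover have "f (inward x) < f x" "f (p (anchor x)) \<le> f (inward x)" using inward_side[OF x] False by auto
      ultimately have "f (inward x) < f y" "f y < f x"
        using far closer anchor_dist_right[of "anchor x"] by auto
      then show False using no_right_hanger_inside_inward_edge[OF xV yV] yS False by simp
    qed
  qed
qed

lemma hanging_insert: "hanging (insert x earlier) (anchor x) (left_of_anchor x) = insert x (hanging earlier (anchor x) (left_of_anchor x))"
  unfolding hanging_def by auto

lemma hanging_insert_other:
  "(k, s) \<noteq> (anchor x, left_of_anchor x) \<Longrightarrow> hanging (insert x earlier) k s = hanging earlier k s"
  unfolding hanging_def by auto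

lemma outermost_earlier_iff: "outermost earlier (anchor x) (left_of_anchor x) z \<longleftrightarrow> z = inward x"
  using outermost_unique[OF inserted_subset anchor_x_le] outermost_inward by blast

lemma outermost_insert_iff: "outermost (insert x earlier) (anchor x) (left_of_anchor x) z \<longleftrightarrow> z = x"
proof -
  have "outermost (insert x earlier) (anchor x) (left_of_anchor x) x"
    unfolding outermost_def hanging_insert using hanging_earlier_closer by (auto intro: less_imp_le)
  moreover have "insert x earlier \<subseteq> off_spine" using inserted_subset x by blast
  ultimately show ?thesis using outermost_unique anchor_x_le by blast
qed

lemma outermost_insert_other:
  "(k, s) \<noteq> (anchor x, left_of_anchor x) \<Longrightarrow> outermost (insert x earlier) k s z \<longleftrightarrow> outermost earlier k s z"
  unfolding outermost_def using hanging_insert_other by simp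

lemma pendant_edges_insert:
  "pendant_edges (insert x earlier) =
    pendant_edges earlier - {{embedding (inward x), pendant (anchor x) (left_of_anchor x)}}
      \<union> {{embedding x, pendant (anchor x) (left_of_anchor x)}}"
  (is "?L = ?R")
proof
  show "?L \<subseteq> ?R"
  proof
    fix e assume "e \<in> ?L"
    then obtain z k s where z: "k \<le> r" "outermost (insert x earlier) k s z" "e = {embedding z, pendant k s}"
      by (rule pendant_edgesE)
    show "e \<in> ?R"
    proof (cases "(k, s) = (anchor x, left_of_anchor x)")
      case True
      then show ?thesis using z outermost_insert_iff by simp
    next
      case False
      then have "e \<in> pendant_edges earlier" using z outermost_insert_other pendant_edgesI by simp
      moreover have "e \<noteq> {embedding (inward x), pendant (anchor x) (left_of_anchor x)}"
        using z False pendant_inj pendant_ne_embedding anchor_x_le by (auto simp: doubleton_eq_iff)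
      ultimately show ?thesis by simp
    qed
  qed
  show "?R \<subseteq> ?L"
  proof
    fix e assume e: "e \<in> ?R"
    show "e \<in> ?L"
    proof (cases "e = {embedding x, pendant (anchor x) (left_of_anchor x)}")
      case True
      then show ?thesis using pendant_edgesI[OF anchor_x_le] outermost_insert_iff by simp
    next
      case False
      then have e': "e \<in> pendant_edges earlier" "e \<noteq> {embedding (inward x), pendant (anchor x) (left_of_anchor x)}"
        using e by auto
      obtain z k s where z: "k \<le> r" "outermost earlier k s z" "e = {embedding z, pendant k s}"
        using e'(1) by (rule pendant_edgesE)
      have "(k, s) \<noteq> (anchor x, left_of_anchor x)"
      proof
        assume ks: "(k, s) = (anchor x, left_of_anchor x)"
        then have "z = inward x" using z(2) outermost_earlier_iff by simp
        then show False using z(3) e'(2) ks by simp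
      qed
      then show ?thesis using z outermost_insert_other pendant_edgesI by simp
    qed
  qed
qed

lemma subdiv_E_insert:
  "subdiv_E (insert x earlier) =
    subdiv_E earlier - {{embedding (inward x), pendant (anchor x) (left_of_anchor x)}}
      \<union> {{embedding (inward x), embedding x}, {embedding x, pendant (anchor x) (left_of_anchor x)}}"
proof -
  have "{embedding (inward x), pendant (anchor x) (left_of_anchor x)} \<notin> G_path_edges \<union> inward_edges earlier"
    using pendant_notin_G_path_edge pendant_notin_inward_edge[OF anchor_x_le] by blast
  then show ?thesis
    unfolding subdiv_E_def inward_edges_insert pendant_edges_insert by (auto simp: insert_commute)
qed

lemma subdiv_step_insert:
  "subdiv_step (subdiv_V earlier) (subdiv_E earlier) (subdiv_V (insert x earlier)) (subdiv_E (insert x earlier))"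
  unfolding subdiv_step_def
proof (intro exI conjI)
  show "{embedding (inward x), pendant (anchor x) (left_of_anchor x)} \<in> subdiv_E earlier"
    unfolding subdiv_E_def using pendant_edgesI[OF anchor_x_le outermost_inward] by simp
  show "embedding (inward x) \<noteq> pendant (anchor x) (left_of_anchor x)"
    using pendant_ne_embedding[OF anchor_x_le] by simp
  have x': "x \<in> V" "x \<notin> spine" using x unfolding off_spine_def by auto
  show "embedding x \<notin> subdiv_V earlier"
  proof
    assume "embedding x \<in> subdiv_V earlier"
    then consider "embedding x \<in> GV G_size" | y where "y \<in> earlier" "embedding x = embedding y"
      unfolding subdiv_V_def image_iff by (elim UnE bexE) auto
    then show False
    proof cases
      case 1
      then show False using GV_le embedding_off_spine[OF x'(2)] unfolding offset_def by fastforce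
    next
      case (2 y)
      then have "y \<in> V" "y \<notin> spine" using inserted_subset unfolding off_spine_def by auto
      then have "y = x" using 2 embedding_off_spine x' f_inj by auto
      then show False using 2 x_notin_earlier by simp
    qed
  qed
  show "subdiv_V (insert x earlier) = insert (embedding x) (subdiv_V earlier)"
    unfolding subdiv_V_def by auto
qed (rule subdiv_E_insert)

end

lemma outermost_empty: "outermost {} k s z \<longleftrightarrow> z = p k"
  unfolding outermost_def hanging_def by auto

lemma pendant_edges_empty:
  "pendant_edges {} = {{3 * i, 3 * i + 1} | i. 2 \<le> i \<and> i + 1 \<le> G_size}
    \<union> {{3 * i, 3 * i + 2} | i. 2 \<le> i \<and> i + 1 \<le> G_size}"
proof -
  have pendant_edge: "{embedding (p k), pendant k s} = {3 * (k + 2), 3 * (k + 2) + (if s then 1 else 2)}"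
    if "k \<le> r" for k s
    using embedding_spine[OF that] unfolding pendant_def by simp
  have "pendant_edges {} = {{3 * (k + 2), 3 * (k + 2) + (if s then 1 else 2)} | k s. k \<le> r}"
    unfolding pendant_edges_def outermost_empty using pendant_edge by blast
  also have "\<dots> = {{3 * i, 3 * i + 1} | i. 2 \<le> i \<and> i + 1 \<le> G_size}
      \<union> {{3 * i, 3 * i + 2} | i. 2 \<le> i \<and> i + 1 \<le> G_size}"
  proof (intro equalityI subsetI)
    fix e assume "e \<in> {{3 * (k + 2), 3 * (k + 2) + (if s then 1 else 2)} | k s. k \<le> r}"
    then obtain k s where k: "k \<le> r" "e = {3 * (k + 2), 3 * (k + 2) + (if s then 1 else 2)}" by blast
    then have i: "2 \<le> k + 2" "k + 2 + 1 \<le> G_size" unfolding G_size_def by simp_all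
    show "e \<in> {{3 * i, 3 * i + 1} | i. 2 \<le> i \<and> i + 1 \<le> G_size}
        \<union> {{3 * i, 3 * i + 2} | i. 2 \<le> i \<and> i + 1 \<le> G_size}"
    proof (cases s)
      case True
      then have "e \<in> {{3 * i, 3 * i + 1} | i. 2 \<le> i \<and> i + 1 \<le> G_size}"
        using k i by (intro CollectI exI[of _ "k + 2"]) simp
      then show ?thesis by blast
    next
      case False
      then have "e \<in> {{3 * i, 3 * i + 2} | i. 2 \<le> i \<and> i + 1 \<le> G_size}"
        using k i by (intro CollectI exI[of _ "k + 2"]) simp
      then show ?thesis by blast
    qed
  next
    fix e assume "e \<in> {{3 * i, 3 * i + 1} | i. 2 \<le> i \<and> i + 1 \<le> G_size}
        \<union> {{3 * i, 3 * i + 2} | i. 2 \<le> i \<and> i + 1 \<le> G_size}"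
    then show "e \<in> {{3 * (k + 2), 3 * (k + 2) + (if s then 1 else 2)} | k s. k \<le> r}"
    proof (elim UnE CollectE exE conjE)
      fix i assume "e = {3 * i, 3 * i + 1}" "2 \<le> i" "i + 1 \<le> G_size"
      then have "i - 2 \<le> r" "e = {3 * (i - 2 + 2), 3 * (i - 2 + 2) + (if True then 1 else 2)}"
        unfolding G_size_def by auto
      then show ?thesis by blast
    next
      fix i assume "e = {3 * i, 3 * i + 2}" "2 \<le> i" "i + 1 \<le> G_size"
      then have "i - 2 \<le> r" "e = {3 * (i - 2 + 2), 3 * (i - 2 + 2) + (if False then 1 else 2)}"
        unfolding G_size_def by auto
      then show ?thesis by blast
    qed
  qed
  finally show ?thesis .
qed

lemma subdiv_E_empty: "subdiv_E {} = GE G_size"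
  unfolding subdiv_E_def pendant_edges_empty G_path_edges_def GE_def inward_edges_def by auto

lemma subdivision_G_subdiv: "subdivision (GV G_size) (GE G_size) (subdiv_V (inserted t)) (subdiv_E (inserted t))"
proof (induction t)
  case 0
  have "inserted 0 = {}" unfolding inserted_def by simp
  then show ?case using subdiv_E_empty subdivision.refl unfolding subdiv_V_def by simp
next
  case (Suc t)
  show ?case
  proof (cases "\<exists>x\<in>off_spine. insertion_key x = t")
    case False
    then have "inserted (Suc t) = inserted t" using inserted_Suc by auto
    then show ?thesis using Suc by simp
  next
    case True
    then obtain x where x: "x \<in> off_spine" "insertion_key x = t" by blast
    then have "{y \<in> off_spine. insertion_key y = t} = {x}" using insertion_key_inj by auto
    then have "inserted (Suc t) = insert x (inserted (insertion_key x))" using inserted_Suc x by auto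
    then show ?thesis using Suc subdiv_step_insert[OF x(1)] x(2) subdivision.step by metis
  qed
qed

lemma inj_on_embedding: "inj_on embedding V"
proof (rule inj_onI)
  fix u v assume uv: "u \<in> V" "v \<in> V" "embedding u = embedding v"
  consider "u \<in> spine" "v \<in> spine" | "u \<in> spine" "v \<notin> spine" | "u \<notin> spine" "v \<in> spine"
    | "u \<notin> spine" "v \<notin> spine" by blast
  then show "u = v"
  proof cases
    case 1
    then obtain a b where "a \<le> r" "u = p a" "b \<le> r" "v = p b" using in_spine_iff by blast
    then show ?thesis using uv(3) embedding_spine by simp
  next
    case 2
    then show ?thesis using uv(3) embedding_spine_less_offset embedding_off_spine by fastforce
  next
    case 3
    then show ?thesis using uv(3) embedding_spine_less_offset embedding_off_spine by fastforce
  next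
    case 4
    then show ?thesis using uv f_inj embedding_off_spine by simp
  qed
qed

lemma embedding_vertices: "embedding ` V \<subseteq> subdiv_V off_spine"
proof
  fix y assume "y \<in> embedding ` V"
  then obtain x where x: "x \<in> V" "y = embedding x" by blast
  show "y \<in> subdiv_V off_spine"
  proof (cases "x \<in> spine")
    case True
    then obtain k where k: "k \<le> r" "x = p k" using in_spine_iff by blast
    then have "y = 3 * (k + 2)" using x embedding_spine by simp
    moreover have "3 * (k + 2) \<in> GV G_size" using k unfolding G_size_def by (intro GV_memI) auto
    ultimately show ?thesis unfolding subdiv_V_def by simp
  next
    case False
    then show ?thesis using x unfolding subdiv_V_def off_spine_def by simp
  qed
qed

lemma embedding_edges:
  assumes uv: "{u, v} \<in> E"
  shows "{embedding u, embedding v} \<in> subdiv_E off_spine"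
proof (cases "{u, v} \<in> spine_edges")
  case True
  then obtain i where i: "i < r" "{u, v} = {p i, p (Suc i)}" unfolding spine_edges_def by blast
  have "{embedding u, embedding v} = {3 * (i + 2), 3 * (i + 2 + 1)}"
    using i embedding_spine[of i] embedding_spine[of "Suc i"] by (auto simp: doubleton_eq_iff)
  moreover have "{3 * (i + 2), 3 * (i + 2 + 1)} \<in> G_path_edges"
    unfolding G_path_edges_def G_size_def using i by (intro CollectI exI[of _ "i + 2"]) simp
  ultimately show ?thesis unfolding subdiv_E_def by simp
next
  case False
  then have uvR: "{u, v} \<in> off_edges" using uv unfolding off_edges_def by simp
  have "u \<in> V" "v \<in> V" using off_edge_ends[OF uvR] by auto
  then consider "u \<in> off_spine" "v = inward u" | "v \<in> off_spine" "u = inward v"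
    using off_edge_inward[OF uvR] unfolding off_spine_def by blast
  then show ?thesis
  proof cases
    case 1
    then show ?thesis using inward_edgesI[of u off_spine] unfolding subdiv_E_def by simp
  next
    case 2
    then show ?thesis using inward_edgesI[of v off_spine] unfolding subdiv_E_def by (simp add: insert_commute)
  qed
qed

theorem embeds_in_homeomorph_of_G:
  "\<exists>n\<ge>2. \<exists>(HV :: nat set) HE. homeomorphic HV HE (GV n) (GE n) \<and>
     (\<exists>V' E'. subgraph V' E' HV HE \<and> graph_iso V E V' E')"
proof -
  have sd: "subdivision (GV G_size) (GE G_size) (subdiv_V off_spine) (subdiv_E off_spine)"
    using subdivision_G_subdiv[of "Suc (card V) * Suc (card V)"] inserted_all by simp
  then have "homeomorphic (subdiv_V off_spine) (subdiv_E off_spine) (GV G_size) (GE G_size)"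
    by (rule homeomorphic_subdivision[OF graph_G])
  moreover have "\<exists>V' E'. subgraph V' E' (subdiv_V off_spine) (subdiv_E off_spine) \<and> graph_iso V E V' E'"
    using subgraph_iso_if_embedding[OF graph inj_on_embedding embedding_vertices] embedding_edges by blast
  moreover have "2 \<le> G_size" unfolding G_size_def by simp
  ultimately show ?thesis by blast
qed

end

theorem homeomorph_of_G_if_cutwidth_le2:
  assumes "tree V E" "cutwidth_le2 V E"
  shows "\<exists>n\<ge>2. \<exists>(HV :: nat set) HE. homeomorphic HV HE (GV n) (GE n) \<and>
    (\<exists>V' E'. subgraph V' E' HV HE \<and> graph_iso V E V' E')"
proof -
  have g: "graph V E" and conn: "connected_graph V E" and acyclic: "\<not> has_cycle V E" and "V \<noteq> {}"
    using assms(1) unfolding tree_def by auto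
  obtain f where f: "bij_betw f V {1..card V}" and width: "\<forall>i. card (cut_edges f E i) \<le> 2"
    using assms(2) cutwidth_le2_iff[OF g] by blast
  obtain p r where "\<forall>i\<le>r. p i \<in> V" "\<forall>i<r. {p i, p (Suc i)} \<in> E"
    "\<forall>i<r. f (p i) < f (p (Suc i))" "f (p 0) = 1" "f (p r) = card V"
    by (rule increasing_spine_exists[OF g conn \<open>V \<noteq> {}\<close> f width])
  then interpret width2_spine V E f p r
    using g conn acyclic f width by unfold_locales
  show ?thesis by (rule embeds_in_homeomorph_of_G)
qed

theorem mainTheorem2:
  fixes V :: "'a set" and E :: "'a set set"
  assumes "tree V E"
  shows "cutwidth_le2 V E \<longleftrightarrow>
    (\<exists>n\<ge>2. \<exists>(HV :: nat set) HE. homeomorphic HV HE (GV n) (GE n) \<and>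
       (\<exists>V' E'. subgraph V' E' HV HE \<and> graph_iso V E V' E'))"
  using homeomorph_of_G_if_cutwidth_le2[OF assms] cutwidth_le2_if_embeds_in_homeomorph_of_G assms
  unfolding tree_def by blast

end
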